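(* Let $\Gamma$ be a connected simplicial graph which is tree-graded with respect to $\{\Gamma_i\}_{i\in I}$, with shortest path metric $d$ and basepoint $e\in V(\Gamma)$. For each $i$ let $e_i$ be the unique vertex of $\Gamma_i$ closest to $e$. Let $T_\Gamma$ be the $e$-distance tree and, for vertices $x,y$, let $\sigma_T(x,y)$ be the distance in $T_\Gamma$ between the images of $x$ and $y$, and $\sigma_I(x,y)=\sum_{i\in I}d(x'_i,y'_i)$, where $x'_i=x_{j}$ if $i=i_j\in I_x$ and $x'_i=e_i$ otherwise (similarly for $y$). Let $d'=\sigma_T+\sigma_I$. Then for all vertices $x,y$, \[ \tfrac12 d(x,y)\leq d'(x,y)\leq 2d(x,y). \]
   Context: Tree-graded: (1) every vertex and every simple loop of $\Gamma$ lies in some $\Gamma_i$ (non-empty connected subgraphs); (2) for $i\neq j$, $\Gamma_i\not\subseteq\Gamma_j$ and $|V(\Gamma_i)\cap V(\Gamma_j)|\leq 1$. For each vertex $x$ there are finite sets $I_x=\{i_0,\dots,i_k\}$ and $\{x_0,\dots,x_k=x\}$ such that every geodesic from $e$ to $x$ decomposes as $g_0\overline{g_0}g_1\cdots\overline{g_{k-1}}g_k$ with $g_j\subseteq\Gamma_{i_j}$ running from $e_{i_j}$ to $x_j$ and each $\overline{g_j}$ of length at most $1$; these are the sets $I_x$ and points $x_j$ used above. The $e$-distance tree $T_\Gamma$ is the simplicial tree obtained from $\Gamma$ by identifying vertices $x\sim y$ whenever $x,y\in\Gamma_i$ for some $i$ and $d(e_i,x)=d(e_i,y)$, equipped with its path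 metric. *)

theory Defs
  imports Complex_Main
begin

(* Graphs: vertex set V and symmetric irreflexive edge relation E (simplicial graph).
   Paths/walks are nonempty vertex lists; a walk with n+1 vertices has length n. *)

definition walk :: "('v \<Rightarrow> 'v \<Rightarrow> bool) \<Rightarrow> 'v list \<Rightarrow> bool" where
  "walk A p \<longleftrightarrow> p \<noteq> [] \<and> (\<forall>k. Suc k < length p \<longrightarrow> A (p!k) (p!Suc k))"

definition gdist :: "('v \<Rightarrow> 'v \<Rightarrow> bool) \<Rightarrow> 'v \<Rightarrow> 'v \<Rightarrow> nat" where
  "gdist A x y = (LEAST n. \<exists>p. walk A p \<and> hd p = x \<and> last p = y \<and> length p = Suc n)"

definition simplicial_graph :: "'v set \<Rightarrow> ('v \<Rightarrow> 'v \<Rightarrow> bool) \<Rightarrow> bool" where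
  "simplicial_graph V E \<longleftrightarrow>
     (\<forall>u v. E u v \<longrightarrow> u \<in> V \<and> v \<in> V) \<and> (\<forall>u v. E u v \<longrightarrow> E v u) \<and> (\<forall>u. \<not> E u u)"

definition connected_graph :: "'v set \<Rightarrow> ('v \<Rightarrow> 'v \<Rightarrow> bool) \<Rightarrow> bool" where
  "connected_graph V E \<longleftrightarrow> simplicial_graph V E \<and> V \<noteq> {} \<and>
     (\<forall>x\<in>V. \<forall>y\<in>V. \<exists>p. walk E p \<and> hd p = x \<and> last p = y)"

definition subgraph :: "'v set \<Rightarrow> ('v \<Rightarrow> 'v \<Rightarrow> bool) \<Rightarrow> 'v set \<Rightarrow> ('v \<Rightarrow> 'v \<Rightarrow> bool) \<Rightarrow> bool" where
  "subgraph V E W F \<longleftrightarrow> W \<subseteq> V \<and> (\<forall>u v. F u v \<longrightarrow> E u v \<and> u \<in> W \<and> v \<in> W) \<and>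
     (\<forall>u v. F u v \<longrightarrow> F v u)"

definition connected_subgraph :: "'v set \<Rightarrow> ('v \<Rightarrow> 'v \<Rightarrow> bool) \<Rightarrow> 'v set \<Rightarrow> ('v \<Rightarrow> 'v \<Rightarrow> bool) \<Rightarrow> bool" where
  "connected_subgraph V E W F \<longleftrightarrow> subgraph V E W F \<and> W \<noteq> {} \<and>
     (\<forall>x\<in>W. \<forall>y\<in>W. \<exists>p. walk F p \<and> hd p = x \<and> last p = y)"

(* simple loop: closed walk with at least 3 distinct vertices, no repeated vertex *)
definition simple_loop :: "('v \<Rightarrow> 'v \<Rightarrow> bool) \<Rightarrow> 'v list \<Rightarrow> bool" where
  "simple_loop E p \<longleftrightarrow> walk E p \<and> 4 \<le> length p \<and> hd p = last p \<and> distinct (butlast p)"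

definition walk_in :: "('v \<Rightarrow> 'v \<Rightarrow> bool) \<Rightarrow> 'v list \<Rightarrow> bool" where
  "walk_in F p \<longleftrightarrow> (\<forall>k. Suc k < length p \<longrightarrow> F (p!k) (p!Suc k))"

(* tree-graded w.r.t. the pieces Gamma_i = (VS i, ES i), i \<in> I *)
definition tree_graded ::
  "'v set \<Rightarrow> ('v \<Rightarrow> 'v \<Rightarrow> bool) \<Rightarrow> 'i set \<Rightarrow> ('i \<Rightarrow> 'v set) \<Rightarrow> ('i \<Rightarrow> 'v \<Rightarrow> 'v \<Rightarrow> bool) \<Rightarrow> bool" where
  "tree_graded V E I VS ES \<longleftrightarrow>
     (\<forall>i\<in>I. connected_subgraph V E (VS i) (ES i)) \<and>
     (\<forall>v\<in>V. \<exists>i\<in>I. v \<in> VS i) \<and>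
     (\<forall>p. simple_loop E p \<longrightarrow> (\<exists>i\<in>I. walk_in (ES i) p)) \<and>
     (\<forall>i\<in>I. \<forall>j\<in>I. i \<noteq> j \<longrightarrow>
        \<not> (VS i \<subseteq> VS j \<and> (\<forall>u v. ES i u v \<longrightarrow> ES j u v)) \<and>
        (\<forall>a\<in>VS i \<inter> VS j. \<forall>b\<in>VS i \<inter> VS j. a = b))"

definition entry :: "('v \<Rightarrow> 'v \<Rightarrow> bool) \<Rightarrow> ('i \<Rightarrow> 'v set) \<Rightarrow> 'v \<Rightarrow> 'i \<Rightarrow> 'v" where
  "entry E VS e i = (THE v. v \<in> VS i \<and> (\<forall>w\<in>VS i. w \<noteq> v \<longrightarrow> gdist E e v < gdist E e w))"

definition geodesic :: "('v \<Rightarrow> 'v \<Rightarrow> bool) \<Rightarrow> 'v \<Rightarrow> 'v \<Rightarrow> 'v list \<Rightarrow> bool" where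
  "geodesic E x y p \<longleftrightarrow> walk E p \<and> hd p = x \<and> last p = y \<and> length p = Suc (gdist E x y)"

(* decomp ... x ixs xs: ixs = [i_0,...,i_k] (the set I_x), xs = [x_0,...,x_k] with x_k = x, and every
   geodesic p from e to x decomposes as g_0 gbar_0 g_1 ... gbar_{k-1} g_k, where g_j = p[a j .. b j]
   is a path in Gamma_{i_j} from e_{i_j} to x_j and gbar_j = p[b j .. a (j+1)] has length \<le> 1.
   The g_j are maximal: a connecting edge gbar_j (if of length 1) is an edge of no piece. *)
definition decomp ::
  "'v set \<Rightarrow> ('v \<Rightarrow> 'v \<Rightarrow> bool) \<Rightarrow> 'i set \<Rightarrow> ('i \<Rightarrow> 'v set) \<Rightarrow> ('i \<Rightarrow> 'v \<Rightarrow> 'v \<Rightarrow> bool) \<Rightarrow> 'v \<Rightarrow>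
   'v \<Rightarrow> 'i list \<Rightarrow> 'v list \<Rightarrow> bool" where
  "decomp V E I VS ES e x ixs xs \<longleftrightarrow>
     ixs \<noteq> [] \<and> length xs = length ixs \<and> distinct ixs \<and> set ixs \<subseteq> I \<and> last xs = x \<and>
     (\<forall>p. geodesic E e x p \<longrightarrow>
        (\<exists>a b :: nat \<Rightarrow> nat. a 0 = 0 \<and> b (length ixs - 1) = length p - 1 \<and>
          (\<forall>j < length ixs. a j \<le> b j \<and> p ! (a j) = entry E VS e (ixs!j) \<and> p ! (b j) = xs!j \<and>
             (\<forall>m. a j \<le> m \<and> m \<le> b j \<longrightarrow> p!m \<in> VS (ixs!j)) \<and>
             (\<forall>m. a j \<le> m \<and> m < b j \<longrightarrow> ES (ixs!j) (p!m) (p!Suc m))) \<and>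
          (\<forall>j. Suc j < length ixs \<longrightarrow> b j \<le> a (Suc j) \<and> a (Suc j) \<le> Suc (b j) \<and>
             (a (Suc j) = Suc (b j) \<longrightarrow> (\<forall>i\<in>I. \<not> ES i (p ! b j) (p ! a (Suc j)))))))"

definition dchoice ::
  "'v set \<Rightarrow> ('v \<Rightarrow> 'v \<Rightarrow> bool) \<Rightarrow> 'i set \<Rightarrow> ('i \<Rightarrow> 'v set) \<Rightarrow> ('i \<Rightarrow> 'v \<Rightarrow> 'v \<Rightarrow> bool) \<Rightarrow> 'v \<Rightarrow>
   'v \<Rightarrow> 'i list \<times> 'v list" where
  "dchoice V E I VS ES e x = (SOME q. decomp V E I VS ES e x (fst q) (snd q))"

definition xprime ::
  "'v set \<Rightarrow> ('v \<Rightarrow> 'v \<Rightarrow> bool) \<Rightarrow> 'i set \<Rightarrow> ('i \<Rightarrow> 'v set) \<Rightarrow> ('i \<Rightarrow> 'v \<Rightarrow> 'v \<Rightarrow> bool) \<Rightarrow> 'v \<Rightarrow>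
   'v \<Rightarrow> 'i \<Rightarrow> 'v" where
  "xprime V E I VS ES e x i =
     (let ixs = fst (dchoice V E I VS ES e x); xs = snd (dchoice V E I VS ES e x) in
      if i \<in> set ixs then xs ! (THE j. j < length ixs \<and> ixs ! j = i) else entry E VS e i)"

(* sigma_I(x,y) = sum over i of d(x'_i,y'_i); only finitely many terms are nonzero *)
definition sigma_I ::
  "'v set \<Rightarrow> ('v \<Rightarrow> 'v \<Rightarrow> bool) \<Rightarrow> 'i set \<Rightarrow> ('i \<Rightarrow> 'v set) \<Rightarrow> ('i \<Rightarrow> 'v \<Rightarrow> 'v \<Rightarrow> bool) \<Rightarrow> 'v \<Rightarrow>
   'v \<Rightarrow> 'v \<Rightarrow> nat" where
  "sigma_I V E I VS ES e x y =
     (\<Sum>i \<in> {i\<in>I. xprime V E I VS ES e x i \<noteq> xprime V E I VS ES e y i}.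
        gdist E (xprime V E I VS ES e x i) (xprime V E I VS ES e y i))"

(* e-distance tree: identify x ~ y if x,y \<in> Gamma_i and d(e_i,x) = d(e_i,y); take generated equivalence *)
definition tid ::
  "'v set \<Rightarrow> ('v \<Rightarrow> 'v \<Rightarrow> bool) \<Rightarrow> 'i set \<Rightarrow> ('i \<Rightarrow> 'v set) \<Rightarrow> 'v \<Rightarrow> 'v \<Rightarrow> 'v \<Rightarrow> bool" where
  "tid V E I VS e x y \<longleftrightarrow> x \<in> V \<and> y \<in> V \<and>
     (\<exists>i\<in>I. x \<in> VS i \<and> y \<in> VS i \<and> gdist E (entry E VS e i) x = gdist E (entry E VS e i) y)"

definition tclass ::
  "'v set \<Rightarrow> ('v \<Rightarrow> 'v \<Rightarrow> bool) \<Rightarrow> 'i set \<Rightarrow> ('i \<Rightarrow> 'v set) \<Rightarrow> 'v \<Rightarrow> 'v \<Rightarrow> 'v set" where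
  "tclass V E I VS e x = {y. (tid V E I VS e)\<^sup>*\<^sup>* x y}"

definition tadj ::
  "'v set \<Rightarrow> ('v \<Rightarrow> 'v \<Rightarrow> bool) \<Rightarrow> 'i set \<Rightarrow> ('i \<Rightarrow> 'v set) \<Rightarrow> 'v \<Rightarrow> 'v set \<Rightarrow> 'v set \<Rightarrow> bool" where
  "tadj V E I VS e C D \<longleftrightarrow> C \<in> tclass V E I VS e ` V \<and> D \<in> tclass V E I VS e ` V \<and> C \<noteq> D \<and>
     (\<exists>u\<in>C. \<exists>v\<in>D. E u v)"

definition sigma_T ::
  "'v set \<Rightarrow> ('v \<Rightarrow> 'v \<Rightarrow> bool) \<Rightarrow> 'i set \<Rightarrow> ('i \<Rightarrow> 'v set) \<Rightarrow> 'v \<Rightarrow> 'v \<Rightarrow> 'v \<Rightarrow> nat" where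
  "sigma_T V E I VS e x y = gdist (tadj V E I VS e) (tclass V E I VS e x) (tclass V E I VS e y)"

definition dprime ::
  "'v set \<Rightarrow> ('v \<Rightarrow> 'v \<Rightarrow> bool) \<Rightarrow> 'i set \<Rightarrow> ('i \<Rightarrow> 'v set) \<Rightarrow> ('i \<Rightarrow> 'v \<Rightarrow> 'v \<Rightarrow> bool) \<Rightarrow> 'v \<Rightarrow>
   'v \<Rightarrow> 'v \<Rightarrow> nat" where
  "dprime V E I VS ES e x y = sigma_T V E I VS e x y + sigma_I V E I VS ES e x y"

end

theory Submission
  imports Defs
begin

text \<open>Write \<open>proj x i\<close> for the nearest-point projection of \<open>x\<close> onto the piece \<open>\<Gamma>\<^sub>i\<close>.
  Along a geodesic from \<open>e\<close> to \<open>x\<close>, the first vertex in \<open>\<Gamma>\<^sub>i\<close> is \<open>proj e i = e\<^sub>i\<close> and the last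
  one is \<open>proj x i\<close>; so the points \<open>x'\<^sub>i\<close> are exactly \<open>proj x i\<close>. A geodesic from \<open>x\<close> to \<open>y\<close>
  runs through each piece along a segment of length \<open>d(proj x i, proj y i)\<close>, and all its other
  edges are bridges (edges of no piece), so \<open>d(x,y) = \<sigma>\<^sub>I(x,y) + b\<close> with \<open>b\<close> the number of these
  bridges. The quotient map to \<open>T\<^sub>\<Gamma>\<close> does not increase distances, so \<open>\<sigma>\<^sub>T \<le> d\<close>. Conversely every
  bridge separates \<open>x\<close> from \<open>y\<close> in \<open>T\<^sub>\<Gamma>\<close> too, since the identifications happen inside pieces, which
  contain no bridge; hence \<open>b \<le> \<sigma>\<^sub>T\<close>. Together, \<open>d \<le> d' \<le> 2d\<close>.\<close>

section \<open>Walks and geodesics\<close>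

lemma walk_iff_successively: "walk A p \<longleftrightarrow> p \<noteq> [] \<and> successively A p"
  by (simp add: walk_def successively_conv_nth)

lemma walk_in_iff_successively: "walk_in A p \<longleftrightarrow> successively A p"
  by (simp add: walk_in_def successively_conv_nth)

lemma walk_singleton [simp]: "walk A [x]"
  by (simp add: walk_iff_successively)

lemma walk_Cons_Cons [simp]: "walk A (x # y # p) \<longleftrightarrow> A x y \<and> walk A (y # p)"
  by (simp add: walk_iff_successively)

lemma walk_not_Nil: "walk A p \<Longrightarrow> p \<noteq> []"
  by (simp add: walk_def)

lemma walk_nth: "walk A p \<Longrightarrow> Suc k < length p \<Longrightarrow> A (p!k) (p!Suc k)"
  by (simp add: walk_def)

lemma walk_mono: "walk A p \<Longrightarrow> (\<And>u v. A u v \<Longrightarrow> B u v) \<Longrightarrow> walk B p"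
  unfolding walk_def by auto

lemma walk_take: "walk A p \<Longrightarrow> 0 < k \<Longrightarrow> walk A (take k p)"
  unfolding walk_def by auto

lemma walk_drop: "walk A p \<Longrightarrow> k < length p \<Longrightarrow> walk A (drop k p)"
  unfolding walk_def by auto

lemma walk_append_left: "walk A (xs @ ys) \<Longrightarrow> xs \<noteq> [] \<Longrightarrow> walk A xs"
  unfolding walk_iff_successively by (simp add: successively_append_iff)

lemma walk_append_right: "walk A (xs @ ys) \<Longrightarrow> ys \<noteq> [] \<Longrightarrow> walk A ys"
  unfolding walk_iff_successively by (simp add: successively_append_iff)

lemma walk_append_edge:
  "walk A p \<Longrightarrow> walk A q \<Longrightarrow> A (last p) (hd q) \<Longrightarrow> walk A (p @ q)"
  unfolding walk_iff_successively by (auto simp: successively_append_iff)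

lemma walk_glue:
  assumes "walk A p" "walk A q" "last p = hd q"
  shows "walk A (p @ tl q)"
  using assms unfolding walk_iff_successively
  by (cases q) (auto simp: successively_append_iff successively_Cons)

lemma last_glue: "p \<noteq> [] \<Longrightarrow> q \<noteq> [] \<Longrightarrow> last p = hd q \<Longrightarrow> last (p @ tl q) = last q"
  by (cases q) auto

lemma last_take_Suc: "k < length q \<Longrightarrow> last (take (Suc k) q) = q!k"
  by (simp add: take_Suc_conv_app_nth)

lemma walk_rev:
  assumes "\<And>u v. A u v \<Longrightarrow> A v u" "walk A p"
  shows "walk A (rev p)"
  using assms unfolding walk_iff_successively by (auto elim!: successively_mono)

lemma list_split_ends: "p \<noteq> [] \<Longrightarrow> hd p \<noteq> last p \<Longrightarrow> \<exists>mid. p = hd p # mid @ [last p]"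
proof (cases p)
  case (Cons a r)
  assume "hd p \<noteq> last p"
  then have "r \<noteq> []" using Cons by auto
  then show ?thesis using Cons by (intro exI[of _ "butlast r"]) simp
qed simp

lemma gdist_le_walk:
  assumes "walk A p" "hd p = x" "last p = y"
  shows "gdist A x y \<le> length p - 1"
proof -
  have "length p = Suc (length p - 1)" using walk_not_Nil[OF assms(1)] by simp
  then show ?thesis unfolding gdist_def using assms by (intro Least_le) blast
qed

lemma gdist_self [simp]: "gdist A x x = 0"
  using gdist_le_walk[of A "[x]" x x] by simp

lemma geodesic_exists:
  assumes "walk A p" "hd p = x" "last p = y"
  obtains q where "geodesic A x y q"
proof -
  have "length p = Suc (length p - 1)" using walk_not_Nil[OF assms(1)] by simp
  then have "\<exists>n q. walk A q \<and> hd q = x \<and> last q = y \<and> length q = Suc n" using assms by blast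
  from LeastI_ex[OF this] show ?thesis
    using that unfolding geodesic_def gdist_def by blast
qed

lemma geodesic_walk: "geodesic A x y p \<Longrightarrow> walk A p"
  and geodesic_hd: "geodesic A x y p \<Longrightarrow> hd p = x"
  and geodesic_last: "geodesic A x y p \<Longrightarrow> last p = y"
  and geodesic_length: "geodesic A x y p \<Longrightarrow> length p = Suc (gdist A x y)"
  and geodesic_not_Nil: "geodesic A x y p \<Longrightarrow> p \<noteq> []"
  by (auto simp: geodesic_def walk_def)

lemmas geodesicD = geodesic_walk geodesic_hd geodesic_last geodesic_length geodesic_not_Nil

lemma geodesic_nth_last: "geodesic A x y p \<Longrightarrow> p ! gdist A x y = y"
  by (metis geodesic_last geodesic_length geodesic_not_Nil last_conv_nth diff_Suc_1)

lemma gdist_triangle: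
  assumes "walk A p" "hd p = x" "last p = y" "walk A q" "hd q = y" "last q = z"
  shows "gdist A x z \<le> gdist A x y + gdist A y z"
proof -
  obtain p' where p': "geodesic A x y p'" using geodesic_exists[OF assms(1-3)] .
  obtain q' where q': "geodesic A y z q'" using geodesic_exists[OF assms(4-6)] .
  have "walk A (p' @ tl q')"
    using walk_glue[OF geodesic_walk[OF p'] geodesic_walk[OF q']] p' q'
    by (simp add: geodesic_last geodesic_hd)
  moreover have "hd (p' @ tl q') = x" "last (p' @ tl q') = z"
    using last_glue[OF geodesic_not_Nil[OF p'] geodesic_not_Nil[OF q']] p' q' geodesic_not_Nil[OF p']
    by (simp_all add: geodesic_last geodesic_hd)
  ultimately have "gdist A x z \<le> length (p' @ tl q') - 1" by (rule gdist_le_walk)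
  then show ?thesis using p' q' by (simp add: geodesic_length)
qed

lemma gdist_sym:
  assumes "\<And>u v. A u v \<Longrightarrow> A v u"
  shows "gdist A x y = gdist A y x"
proof -
  have rev: "\<exists>p. walk A p \<and> hd p = y \<and> last p = x \<and> length p = Suc n"
    if ex: "\<exists>p. walk A p \<and> hd p = x \<and> last p = y \<and> length p = Suc n" for x y n
  proof -
    obtain p where "walk A p" "hd p = x" "last p = y" "length p = Suc n" using ex by blast
    then show ?thesis using walk_rev[OF assms]
      by (intro exI[of _ "rev p"]) (simp add: hd_rev last_rev)
  qed
  have "\<And>n. (\<exists>p. walk A p \<and> hd p = x \<and> last p = y \<and> length p = Suc n) \<longleftrightarrow>
             (\<exists>p. walk A p \<and> hd p = y \<and> last p = x \<and> length p = Suc n)"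
    using rev[of x y] rev[of y x] by blast
  then show ?thesis unfolding gdist_def by simp
qed

lemma geodesic_distinct:
  assumes g: "geodesic A x y q"
  shows "distinct q"
proof (rule ccontr)
  assume "\<not> distinct q"
  then obtain i j where ij: "i < j" "j < length q" "q!i = q!j"
    by (metis distinct_conv_nth linorder_neqE_nat)
  define q' where "q' = take (Suc i) q @ tl (drop j q)"
  have w: "walk A q" "q \<noteq> []" using geodesic_walk[OF g] geodesic_not_Nil[OF g] .
  have lt: "last (take (Suc i) q) = q!i" using ij by (simp add: last_take_Suc)
  have hd2: "hd (drop j q) = q!j" using ij by (simp add: hd_drop_conv_nth)
  have "walk A q'"
    unfolding q'_def using walk_glue[OF walk_take[OF w(1)] walk_drop[OF w(1) ij(2)]] lt hd2 ij
    by simp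
  moreover have "hd q' = x" "last q' = y"
    unfolding q'_def using g ij w(2) last_glue[of "take (Suc i) q" "drop j q"] lt hd2
    by (auto simp: geodesic_hd geodesic_last)
  ultimately have "gdist A x y \<le> length q' - 1" by (rule gdist_le_walk)
  moreover have "length q' = Suc i + (length q - j - 1)" unfolding q'_def using ij by simp
  ultimately show False using geodesic_length[OF g] ij by linarith
qed

lemma geodesic_gdist_nth:
  assumes g: "geodesic A x y q" and k: "k < length q"
  shows "gdist A x (q!k) = k" "gdist A (q!k) y = length q - 1 - k"
proof -
  have w: "walk A q" "q \<noteq> []" using geodesic_walk[OF g] geodesic_not_Nil[OF g] .
  have w1: "walk A (take (Suc k) q)" "hd (take (Suc k) q) = x" "last (take (Suc k) q) = q!k"
    using walk_take[OF w(1), of "Suc k"] geodesic_hd[OF g] w(2) k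
    by (simp_all add: last_take_Suc)
  have w2: "walk A (drop k q)" "hd (drop k q) = q!k" "last (drop k q) = y"
    using walk_drop[OF w(1) k] geodesic_last[OF g] k by (auto simp: hd_drop_conv_nth)
  have "gdist A x (q!k) \<le> k" "gdist A (q!k) y \<le> length q - 1 - k"
    using gdist_le_walk[OF w1] gdist_le_walk[OF w2] k by simp_all
  moreover have "gdist A x y \<le> gdist A x (q!k) + gdist A (q!k) y"
    using gdist_triangle[OF w1 w2] .
  ultimately show "gdist A x (q!k) = k" "gdist A (q!k) y = length q - 1 - k"
    using geodesic_length[OF g] k by linarith+
qed

lemma geodesic_take:
  assumes g: "geodesic A x y p" and k: "k < length p"
  shows "geodesic A x (p!k) (take (Suc k) p)"
  unfolding geodesic_def
proof (intro conjI)
  show "walk A (take (Suc k) p)" using walk_take[OF geodesic_walk[OF g]] by simp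
  show "hd (take (Suc k) p) = x" using geodesic_hd[OF g] geodesic_not_Nil[OF g] by simp
  show "last (take (Suc k) p) = p!k" using last_take_Suc[OF k] .
  show "length (take (Suc k) p) = Suc (gdist A x (p!k))" using geodesic_gdist_nth[OF g k] k by simp
qed

lemma geodesic_drop:
  assumes g: "geodesic A x y p" and k: "k < length p"
  shows "geodesic A (p!k) y (drop k p)"
  unfolding geodesic_def
proof (intro conjI)
  show "walk A (drop k p)" using walk_drop[OF geodesic_walk[OF g] k] .
  show "hd (drop k p) = p!k" using k by (simp add: hd_drop_conv_nth)
  show "last (drop k p) = y" using geodesic_last[OF g] k by simp
  show "length (drop k p) = Suc (gdist A (p!k) y)" using geodesic_gdist_nth[OF g k] k by simp
qed

lemma geodesic_rev:
  assumes sym: "\<And>u v. A u v \<Longrightarrow> A v u" and g: "geodesic A x y p"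
  shows "geodesic A y x (rev p)"
  unfolding geodesic_def
proof (intro conjI)
  show "walk A (rev p)" using walk_rev[OF sym geodesic_walk[OF g]] .
  show "hd (rev p) = y" "last (rev p) = x" using geodesic_hd[OF g] geodesic_last[OF g]
    by (simp_all add: hd_rev last_rev)
  show "length (rev p) = Suc (gdist A y x)" using geodesic_length[OF g] gdist_sym[of A x y] sym by simp
qed

lemma geodesic_gdist_nth_nth:
  assumes g: "geodesic A x y p" and kl: "k \<le> l" "l < length p"
  shows "gdist A (p!k) (p!l) = l - k"
proof -
  have "(drop k p)!(l - k) = p!l" "l - k < length (drop k p)" using kl by auto
  then show ?thesis using geodesic_gdist_nth(1)[OF geodesic_drop[OF g]] kl by (metis le_less_trans)
qed

lemma walk_set_subset:
  assumes "walk A p" "hd p \<in> S" "\<And>u v. A u v \<Longrightarrow> v \<in> S"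
  shows "set p \<subseteq> S"
proof
  fix z assume "z \<in> set p"
  then obtain k where k: "k < length p" "p!k = z" by (metis in_set_conv_nth)
  show "z \<in> S"
  proof (cases k)
    case 0 then show ?thesis using k assms(1,2) by (simp add: hd_conv_nth walk_def)
  next
    case (Suc k') then show ?thesis using k assms walk_nth[of A p k'] by auto
  qed
qed

lemma distinct_walk_exists:
  assumes "walk A p" "hd p = x" "last p = y"
  obtains q where "walk A q" "distinct q" "hd q = x" "last q = y"
  using geodesic_exists[OF assms] geodesic_distinct geodesic_walk geodesic_hd geodesic_last by metis

lemma interleaved_b_le_a:
  fixes a b :: "nat \<Rightarrow> nat"
  assumes ab: "\<forall>j<L. a j \<le> b j" and ba: "\<forall>j. Suc j < L \<longrightarrow> b j \<le> a (Suc j)"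
  shows "j < j' \<Longrightarrow> j' < L \<Longrightarrow> b j \<le> a j'"
proof (induction j')
  case 0 then show ?case by simp
next
  case (Suc j')
  show ?case
  proof (cases "j = j'")
    case True then show ?thesis using ba Suc.prems by simp
  next
    case False
    then have "b j \<le> a j'" using Suc by simp
    also have "a j' \<le> b j'" using ab Suc.prems by simp
    also have "b j' \<le> a (Suc j')" using ba Suc.prems by simp
    finally show ?thesis .
  qed
qed

lemma interleaved_b_mono:
  fixes a b :: "nat \<Rightarrow> nat"
  assumes ab: "\<forall>j<L. a j \<le> b j" and ba: "\<forall>j. Suc j < L \<longrightarrow> b j \<le> a (Suc j)"
  shows "j \<le> j' \<Longrightarrow> j' < L \<Longrightarrow> b j \<le> b j'"
proof -
  assume j: "j \<le> j'" "j' < L"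
  show "b j \<le> b j'"
  proof (cases "j = j'")
    case False
    then have "b j \<le> a j'" using interleaved_b_le_a[OF ab ba, of j j'] j by simp
    then show ?thesis using ab j by fastforce
  qed simp
qed

lemma interleaved_cover:
  fixes a b :: "nat \<Rightarrow> nat"
  assumes ab: "\<forall>j<L. a j \<le> b j" and ba: "\<forall>j. Suc j < L \<longrightarrow> b j \<le> a (Suc j) \<and> a (Suc j) \<le> Suc (b j)"
    and a0: "a 0 = 0" and bL: "b (L - 1) = n" and L: "0 < L" and t: "t < n"
  shows "(\<exists>j<L. a j \<le> t \<and> t < b j) \<or> (\<exists>j. Suc j < L \<and> b j = t \<and> a (Suc j) = Suc t)"
proof -
  define J where "J = {j. j < L \<and> a j \<le> t}"
  have Jf: "finite J" unfolding J_def by simp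
  have Jne: "0 \<in> J" unfolding J_def using a0 L by simp
  define j where "j = Max J"
  have jJ: "j \<in> J" unfolding j_def using Jf Jne Max_in by blast
  have jmax: "\<And>k. k \<in> J \<Longrightarrow> k \<le> j" unfolding j_def using Jf by simp
  show ?thesis
  proof (cases "t < b j")
    case True then show ?thesis using jJ unfolding J_def by blast
  next
    case False
    have "Suc j < L"
    proof (rule ccontr)
      assume "\<not> Suc j < L"
      moreover have "j < L" using jJ unfolding J_def by simp
      ultimately have "j = L - 1" by linarith
      then show False using False bL t by simp
    qed
    moreover have "\<not> a (Suc j) \<le> t" using jmax[of "Suc j"] \<open>Suc j < L\<close> unfolding J_def by fastforce
    ultimately show ?thesis using ba False by (intro disjI2 exI[of _ j]) force
  qed
qed

section \<open>Tree-graded graphs\<close>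

locale tree_graded_graph =
  fixes V :: "'v set" and E :: "'v \<Rightarrow> 'v \<Rightarrow> bool"
    and I :: "'i set" and VS :: "'i \<Rightarrow> 'v set" and ES :: "'i \<Rightarrow> 'v \<Rightarrow> 'v \<Rightarrow> bool"
  assumes connected: "connected_graph V E" and tree_graded: "tree_graded V E I VS ES"
begin

abbreviation d :: "'v \<Rightarrow> 'v \<Rightarrow> nat" where "d \<equiv> gdist E"

abbreviation proj :: "'v \<Rightarrow> 'i \<Rightarrow> 'v" where "proj b i \<equiv> entry E VS b i"

lemma edge_in_V: "E u v \<Longrightarrow> u \<in> V \<and> v \<in> V"
  and edge_sym: "E u v \<Longrightarrow> E v u"
  and edge_irrefl: "\<not> E u u"
  using connected by (simp_all add: connected_graph_def simplicial_graph_def)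

lemma walk_between: "x \<in> V \<Longrightarrow> y \<in> V \<Longrightarrow> \<exists>p. walk E p \<and> hd p = x \<and> last p = y"
  using connected by (simp add: connected_graph_def)

lemma piece_edge_edge: "i \<in> I \<Longrightarrow> ES i u v \<Longrightarrow> E u v"
  and piece_edge_in_piece: "i \<in> I \<Longrightarrow> ES i u v \<Longrightarrow> u \<in> VS i \<and> v \<in> VS i"
  and piece_edge_sym: "i \<in> I \<Longrightarrow> ES i u v \<Longrightarrow> ES i v u"
  and piece_subset_V: "i \<in> I \<Longrightarrow> VS i \<subseteq> V"
  and piece_not_empty: "i \<in> I \<Longrightarrow> VS i \<noteq> {}"
  and piece_walk_between: "i \<in> I \<Longrightarrow> x \<in> VS i \<Longrightarrow> y \<in> VS i \<Longrightarrow> \<exists>p. walk (ES i) p \<and> hd p = x \<and> last p = y"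
  using tree_graded by (simp_all add: tree_graded_def connected_subgraph_def subgraph_def)

lemma vertex_in_piece: "v \<in> V \<Longrightarrow> \<exists>i\<in>I. v \<in> VS i"
  and simple_loop_in_piece: "simple_loop E p \<Longrightarrow> \<exists>i\<in>I. walk_in (ES i) p"
  using tree_graded by (simp_all add: tree_graded_def)

lemma pieces_eq_if_two_common:
  assumes "i \<in> I" "j \<in> I" "a \<in> VS i" "a \<in> VS j" "b \<in> VS i" "b \<in> VS j" "a \<noteq> b"
  shows "i = j"
  using assms tree_graded unfolding tree_graded_def by blast

lemma piece_edge_unique: "i \<in> I \<Longrightarrow> j \<in> I \<Longrightarrow> ES i u v \<Longrightarrow> ES j u v \<Longrightarrow> i = j"
  by (metis pieces_eq_if_two_common piece_edge_in_piece piece_edge_edge edge_irrefl)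

lemma walk_in_V: "walk E p \<Longrightarrow> hd p \<in> V \<Longrightarrow> set p \<subseteq> V"
  using walk_set_subset[of E p V] edge_in_V by blast

lemma piece_walk_in_piece: "i \<in> I \<Longrightarrow> walk (ES i) p \<Longrightarrow> hd p \<in> VS i \<Longrightarrow> set p \<subseteq> VS i"
  using walk_set_subset[of "ES i" p "VS i"] piece_edge_in_piece by blast

lemma walk_in_piece_set:
  assumes i: "i \<in> I" and p: "walk_in (ES i) p" "2 \<le> length p"
  shows "set p \<subseteq> VS i"
proof -
  have w: "walk (ES i) p" using p by (auto simp: walk_def walk_in_def)
  have "ES i (p!0) (p!Suc 0)" using walk_nth[OF w] p(2) by simp
  then have "hd p \<in> VS i" using piece_edge_in_piece[OF i] p(2) by (cases p) auto
  then show ?thesis using piece_walk_in_piece[OF i w] by simp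
qed

lemma walk_rev_edge: "walk E p \<Longrightarrow> walk E (rev p)"
  using walk_rev[of E p] edge_sym by blast

lemma d_sym: "d x y = d y x"
  using gdist_sym[of E x y] edge_sym by blast

lemma geodesic_between:
  assumes "x \<in> V" "y \<in> V"
  obtains p where "geodesic E x y p"
  using walk_between[OF assms] geodesic_exists by metis

lemma geodesic_rev_edge: "geodesic E x y p \<Longrightarrow> geodesic E y x (rev p)"
  using geodesic_rev[of E] edge_sym by blast

lemma geodesic_in_V: "geodesic E x y p \<Longrightarrow> x \<in> V \<Longrightarrow> set p \<subseteq> V"
  using walk_in_V geodesic_walk geodesic_hd by metis

lemma d_eq_0_iff:
  assumes "x \<in> V" "y \<in> V"
  shows "d x y = 0 \<longleftrightarrow> x = y"
proof
  assume "d x y = 0"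
  obtain p where p: "geodesic E x y p" using geodesic_between[OF assms] .
  then have "length p = 1" using \<open>d x y = 0\<close> by (simp add: geodesic_length)
  then show "x = y" using geodesic_hd[OF p] geodesic_last[OF p] by (cases p) auto
qed simp

text \<open>The detour closes up with a path inside \<open>\<Gamma>\<^sub>i\<close> to a simple loop. That loop lies in one piece,
  which shares \<open>u \<noteq> v\<close> with \<open>\<Gamma>\<^sub>i\<close> and hence is \<open>\<Gamma>\<^sub>i\<close> itself.\<close>

lemma no_detour_from_piece:
  assumes i: "i \<in> I" and w: "walk E (u # mid @ [v])" and dist: "distinct (u # mid @ [v])"
    and uv: "u \<in> VS i" "v \<in> VS i" and mo: "set mid \<inter> VS i = {}" and c: "mid \<noteq> [] \<or> \<not> ES i u v"
  shows False
proof -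
  have uv': "u \<noteq> v" using dist by simp
  obtain Q where Q: "walk (ES i) Q" "distinct Q" "hd Q = v" "last Q = u"
    using piece_walk_between[OF i uv(2) uv(1)] distinct_walk_exists by metis
  have sQ: "set Q \<subseteq> VS i" using piece_walk_in_piece[OF i Q(1)] Q(3) uv(2) by simp
  obtain qm where qm: "Q = v # qm @ [u]"
    using list_split_ends[OF walk_not_Nil[OF Q(1)]] Q(3,4) uv' by auto
  have wQ: "walk E Q" using walk_mono[OF Q(1)] piece_edge_edge[OF i] by blast
  define L where "L = u # mid @ [v] @ qm @ [u]"
  have L2: "L = (u # mid @ [v]) @ tl Q" unfolding L_def qm by simp
  have wL: "walk E L" unfolding L2 using walk_glue[OF w wQ] qm by simp
  have len: "4 \<le> length L"
  proof (rule ccontr)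
    assume "\<not> 4 \<le> length L"
    moreover have "length L = 3 + length mid + length qm" unfolding L_def by simp
    ultimately have "length mid = 0" "length qm = 0" by linarith+
    then have "mid = []" "qm = []" by auto
    then have "ES i v u" using Q(1) qm by simp
    then show False using c \<open>mid = []\<close> piece_edge_sym[OF i] by blast
  qed
  have hdl: "hd L = last L" unfolding L_def by simp
  have dqm: "distinct qm" "u \<notin> set qm" "v \<notin> set qm" using Q(2) qm by auto
  have qmV: "set qm \<subseteq> VS i" using sQ qm by auto
  have "butlast L = (u # mid @ [v]) @ qm" unfolding L_def by (simp add: butlast_append)
  moreover have "set (u # mid @ [v]) \<inter> set qm = {}" using dqm qmV mo by auto
  ultimately have dL: "distinct (butlast L)" using dist dqm by simp
  have "simple_loop E L" unfolding simple_loop_def using wL len hdl dL by blast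
  then obtain j where j: "j \<in> I" "walk_in (ES j) L" using simple_loop_in_piece by blast
  have sL: "set L \<subseteq> VS j" using walk_in_piece_set[OF j] len by simp
  have "u \<in> VS j" "v \<in> VS j" using sL unfolding L_def by auto
  then have ij: "i = j" using pieces_eq_if_two_common[OF i j(1), of u v] uv uv' by simp
  show False
  proof (cases mid)
    case (Cons a r)
    then have "a \<in> VS j" using sL unfolding L_def by auto
    then show False using mo Cons ij by auto
  next
    case Nil
    then have "ES i u v" using j(2) ij unfolding L_def walk_in_iff_successively by simp
    then show False using c Nil by simp
  qed
qed

lemma piece_induced:
  assumes i: "i \<in> I" and uv: "u \<in> VS i" "v \<in> VS i" "E u v"
  shows "ES i u v"
proof (rule ccontr)
  assume "\<not> ES i u v"
  moreover have "u \<noteq> v" using uv(3) edge_irrefl by auto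
  ultimately show False using no_detour_from_piece[OF i, of u "[]" v] uv by simp
qed

lemma piece_convex:
  assumes i: "i \<in> I"
  shows "walk E p \<Longrightarrow> distinct p \<Longrightarrow> hd p \<in> VS i \<Longrightarrow> last p \<in> VS i \<Longrightarrow> set p \<subseteq> VS i"
proof (induction "length p" arbitrary: p rule: less_induct)
  case less
  obtain u rest where p: "p = u # rest" using walk_not_Nil[OF less.prems(1)] by (cases p) auto
  show ?case
  proof (cases "rest = []")
    case True then show ?thesis using p less.prems by simp
  next
    case False
    then have "last rest \<in> VS i" using less.prems(4) p by simp
    then have "\<exists>z\<in>set rest. z \<in> VS i" using False by auto
    then obtain ys z zs where sp: "rest = ys @ z # zs" "z \<in> VS i" "\<forall>y\<in>set ys. y \<notin> VS i"
      by (rule split_list_first_propE)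
    have p2: "p = (u # ys @ [z]) @ zs" using p sp by simp
    have wp: "walk E (u # ys @ [z])" using walk_append_left[of E "u # ys @ [z]" zs] less.prems(1) p2 by simp
    have dp: "distinct (u # ys @ [z])" using less.prems(2) p2 by simp
    have "ys = []"
    proof (rule ccontr)
      assume "ys \<noteq> []"
      moreover have "u \<in> VS i" using less.prems(3) p by simp
      moreover have "set ys \<inter> VS i = {}" using sp(3) by blast
      ultimately show False using no_detour_from_piece[OF i wp dp] sp(2) by blast
    qed
    then have p3: "p = u # (z # zs)" using p sp by simp
    have "set (z # zs) \<subseteq> VS i"
    proof (rule less.hyps)
      show "length (z # zs) < length p" using p3 by simp
      show "walk E (z # zs)" using less.prems(1) p3 walk_append_right[of E "[u]" "z#zs"] by simp
      show "distinct (z # zs)" using less.prems(2) p3 by simp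
      show "hd (z # zs) \<in> VS i" using sp by simp
      show "last (z # zs) \<in> VS i" using less.prems(4) p3 by simp
    qed
    then show ?thesis using p3 less.prems(3) by simp
  qed
qed

lemma piece_convex_walk_in:
  assumes i: "i \<in> I" and "walk E p" "distinct p" "hd p \<in> VS i" "last p \<in> VS i"
  shows "walk_in (ES i) p"
proof -
  have s: "set p \<subseteq> VS i" using piece_convex[OF i] assms by blast
  show ?thesis unfolding walk_in_def
  proof (intro allI impI)
    fix k assume k: "Suc k < length p"
    have "p!k \<in> VS i" "p!Suc k \<in> VS i" using s k by auto
    moreover have "E (p!k) (p!Suc k)" using walk_nth[OF assms(2) k] .
    ultimately show "ES i (p!k) (p!Suc k)" using piece_induced[OF i] by blast
  qed
qed

lemma no_walk_detour_from_piece: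
  assumes i: "i \<in> I" and w: "walk E (u # mid @ [v])" and uv: "u \<in> VS i" "v \<in> VS i" "u \<noteq> v"
    and mne: "mid \<noteq> []" and mo: "set mid \<inter> VS i = {}"
  shows False
proof -
  define X where "X = {u, v} \<union> - VS i"
  define R where "R = (\<lambda>a b. E a b \<and> a \<in> X \<and> b \<in> X \<and> \<not> (a \<in> VS i \<and> b \<in> VS i))"
  define W where "W = u # mid @ [v]"
  have sW: "set W \<subseteq> X" unfolding W_def X_def using mo by auto
  have wR: "walk R W" unfolding walk_def
  proof (intro conjI allI impI)
    show "W \<noteq> []" unfolding W_def by simp
    fix k assume k: "Suc k < length W"
    have e: "E (W!k) (W!Suc k)" using walk_nth[OF w] k unfolding W_def by simp
    have x: "W!k \<in> X" "W!Suc k \<in> X" using sW k by auto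
    have inner: "W!j \<in> set mid" if "0 < j" "j \<le> length mid" for j
      unfolding W_def using that by (cases j) (auto simp: nth_append)
    have "W!k \<in> set mid \<or> W!Suc k \<in> set mid"
    proof (cases k)
      case 0
      then show ?thesis using inner[of "Suc k"] mne by (simp add: Suc_leI)
    next
      case (Suc k')
      then show ?thesis using inner[of k] k unfolding W_def by simp
    qed
    then have "\<not> (W!k \<in> VS i \<and> W!Suc k \<in> VS i)" using mo by blast
    then show "R (W!k) (W!Suc k)" unfolding R_def using e x by blast
  qed
  obtain S where S: "walk R S" "distinct S" "hd S = u" "last S = v"
    using distinct_walk_exists[OF wR] unfolding W_def by auto
  obtain m' where m': "S = u # m' @ [v]"
    using list_split_ends[OF walk_not_Nil[OF S(1)]] S(3,4) uv(3) by auto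
  have sS: "set S \<subseteq> X" using walk_set_subset[OF S(1), of X] S(3) unfolding R_def X_def by auto
  have mo': "set m' \<inter> VS i = {}"
  proof -
    have "set m' \<subseteq> X" "u \<notin> set m'" "v \<notin> set m'" using sS S(2) m' by auto
    then show ?thesis unfolding X_def by auto
  qed
  have wS: "walk E S" using walk_mono[OF S(1)] unfolding R_def by blast
  show False
  proof (cases "m' = []")
    case True
    then have "R u v" using S(1) m' by simp
    then show False unfolding R_def using uv by blast
  next
    case False
    then show False using no_detour_from_piece[OF i, of u m' v] wS S(2) m' uv mo' by simp
  qed
qed

definition avoiding :: "'v \<Rightarrow> 'v \<Rightarrow> 'v \<Rightarrow> 'v \<Rightarrow> bool" where
  "avoiding u v a b \<longleftrightarrow> E a b \<and> \<not> (a = u \<and> b = v) \<and> \<not> (a = v \<and> b = u)"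

lemma avoiding_sym: "avoiding u v a b \<Longrightarrow> avoiding u v b a"
  unfolding avoiding_def using edge_sym by blast

lemma bridge_no_bypass:
  assumes e: "E u v" and nb: "\<forall>i\<in>I. \<not> ES i u v" and W: "walk (avoiding u v) W" "hd W = v" "last W = u"
  shows False
proof -
  obtain S where S: "walk (avoiding u v) S" "distinct S" "hd S = v" "last S = u"
    using distinct_walk_exists[OF W] .
  have Sne: "S \<noteq> []" using walk_not_Nil[OF S(1)] .
  have "u \<noteq> v" using e edge_irrefl by auto
  then obtain m' where m': "S = v # m' @ [u]" using list_split_ends[OF Sne] S(3,4) by auto
  have mne: "m' \<noteq> []"
  proof
    assume "m' = []"
    then have "avoiding u v v u" using S(1) m' by simp
    then show False unfolding avoiding_def by blast
  qed
  have wS: "walk E S" using walk_mono[OF S(1)] unfolding avoiding_def by blast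
  define L where "L = S @ [v]"
  have wL: "walk E L" unfolding L_def using walk_append_edge[OF wS, of "[v]"] e S(4) by simp
  have len: "4 \<le> length L" unfolding L_def m' using mne by (cases m') auto
  have "hd L = last L" unfolding L_def using S(3) Sne by simp
  moreover have "distinct (butlast L)" unfolding L_def using S(2) by simp
  ultimately have "simple_loop E L" unfolding simple_loop_def using wL len by blast
  then obtain j where j: "j \<in> I" "walk_in (ES j) L" using simple_loop_in_piece by blast
  then have "successively (ES j) (S @ [v])" unfolding L_def walk_in_iff_successively by simp
  then have "ES j u v" using S(4) Sne by (simp add: successively_append_iff)
  then show False using nb j by blast
qed

lemma avoiding_other_edge:
  assumes w: "walk E p" and dp: "distinct p" and t: "Suc t < length p" and k: "Suc k < length p" "k \<noteq> t"
  shows "avoiding (p!t) (p!Suc t) (p!k) (p!Suc k)"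
  unfolding avoiding_def
proof (intro conjI)
  show "E (p!k) (p!Suc k)" using walk_nth[OF w k(1)] .
  show "\<not> (p!k = p!t \<and> p!Suc k = p!Suc t)" using nth_eq_iff_index_eq[OF dp] t k by auto
  show "\<not> (p!k = p!Suc t \<and> p!Suc k = p!t)"
  proof
    assume "p!k = p!Suc t \<and> p!Suc k = p!t"
    then have "k = Suc t" "Suc k = t" using nth_eq_iff_index_eq[OF dp] t k by auto
    then show False by simp
  qed
qed

lemma walk_avoiding_take:
  assumes "walk E p" "distinct p" "Suc t < length p"
  shows "walk (avoiding (p!t) (p!Suc t)) (take (Suc t) p)"
  unfolding walk_def using avoiding_other_edge[OF assms] assms(3) by auto

lemma walk_avoiding_drop:
  assumes "walk E p" "distinct p" "Suc t < length p"
  shows "walk (avoiding (p!t) (p!Suc t)) (drop (Suc t) p)"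
  unfolding walk_def using avoiding_other_edge[OF assms] assms(3) by auto

lemma walk_segment_in_piece:
  assumes i: "i \<in> I" and w: "walk E p" and dp: "distinct p" and km: "k \<le> m" "m < length p"
    and pk: "p!k \<in> VS i" and pm: "p!m \<in> VS i"
  shows "(\<forall>t. k \<le> t \<and> t \<le> m \<longrightarrow> p!t \<in> VS i) \<and> (\<forall>t. k \<le> t \<and> t < m \<longrightarrow> ES i (p!t) (p!Suc t))"
proof -
  define s where "s = drop k (take (Suc m) p)"
  have ws: "walk E s" unfolding s_def using walk_drop[OF walk_take[OF w]] km by simp
  have ds: "distinct s" unfolding s_def using dp by simp
  have ls: "length s = Suc m - k" unfolding s_def using km by simp
  have sn: "\<And>j. j < length s \<Longrightarrow> s!j = p!(k + j)" unfolding s_def using km by simp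
  have hs: "hd s = p!k" using sn[of 0] ls km ws by (simp add: hd_conv_nth walk_def)
  have lsn: "last s = p!m" using sn[of "length s - 1"] ls km ws by (simp add: last_conv_nth walk_def)
  have wi: "walk_in (ES i) s" using piece_convex_walk_in[OF i ws ds] hs lsn pk pm by simp
  have ss: "set s \<subseteq> VS i" using piece_convex[OF i ws ds] hs lsn pk pm by simp
  show ?thesis
  proof (intro conjI allI impI)
    fix t assume t: "k \<le> t \<and> t \<le> m"
    then have "s!(t-k) = p!t" "t - k < length s" using sn ls by auto
    then have "s!(t-k) \<in> set s" using nth_mem[of "t-k" s] by blast
    then show "p!t \<in> VS i" using ss \<open>s!(t-k) = p!t\<close> by auto
  next
    fix t assume t: "k \<le> t \<and> t < m"
    then have "ES i (s!(t-k)) (s!Suc (t-k))" using wi ls unfolding walk_in_def by auto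
    moreover have "s!(t-k) = p!t" "s!Suc (t-k) = p!Suc t" using sn t ls by auto
    ultimately show "ES i (p!t) (p!Suc t)" by simp
  qed
qed

section \<open>Nearest-point projections onto pieces\<close>

lemma closest_in_piece_exists:
  assumes "i \<in> I"
  obtains m where "m \<in> VS i" "\<forall>w\<in>VS i. d b m \<le> d b w"
  using ex_has_least_nat[of "\<lambda>w. w \<in> VS i" _ "d b"] piece_not_empty[OF assms] that by blast

lemma geodesic_to_closest_avoids:
  assumes g: "geodesic E b m \<gamma>" and closest: "\<forall>w\<in>VS i. d b m \<le> d b w"
  shows "set (butlast \<gamma>) \<inter> VS i = {}"
proof (rule ccontr)
  assume "set (butlast \<gamma>) \<inter> VS i \<noteq> {}"
  then obtain k where k: "k < length (butlast \<gamma>)" "\<gamma>!k \<in> VS i"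
    by (auto simp: in_set_conv_nth nth_butlast)
  then have "d b (\<gamma>!k) = k" "k < d b m" using geodesic_gdist_nth(1)[OF g, of k] geodesic_length[OF g] by auto
  then show False using closest k(2) by force
qed

lemma first_hit_eq_closest:
  assumes i: "i \<in> I" and b: "b \<in> V" and m: "m \<in> VS i" "\<forall>w\<in>VS i. d b m \<le> d b w"
    and q: "geodesic E b w q" and w: "w \<in> VS i" and av: "set (butlast q) \<inter> VS i = {}"
  shows "w = m"
proof (rule ccontr)
  assume wm: "w \<noteq> m"
  have qb: "walk E q" "hd q = b" "last q = w" "length q = Suc (d b w)" "q \<noteq> []" using geodesicD[OF q] by auto
  have mV: "m \<in> V" using piece_subset_V[OF i] m by auto
  show False
  proof (cases "b \<in> VS i")
    case True
    have "length q = 1"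
    proof (rule ccontr)
      assume "length q \<noteq> 1"
      then have "b \<in> set (butlast q)" using qb(2,5) by (cases q) auto
      then show False using av True by blast
    qed
    then have "w = b" using qb by (cases q) auto
    then have "d b m = 0" using m(2) True by force
    then have "m = b" using d_eq_0_iff[OF b mV] by simp
    then show False using wm \<open>w = b\<close> by simp
  next
    case False
    have bm: "b \<noteq> m" "b \<noteq> w" using False m w by auto
    obtain \<gamma> where g: "geodesic E b m \<gamma>" using geodesic_between[OF b mV] by blast
    have gb: "walk E \<gamma>" "hd \<gamma> = b" "last \<gamma> = m" "length \<gamma> = Suc (d b m)" "\<gamma> \<noteq> []"
      using geodesicD[OF g] by auto
    have "hd \<gamma> \<noteq> last \<gamma>" using gb bm by simp
    then obtain gm where gm: "\<gamma> = b # gm @ [m]" using list_split_ends[OF gb(5)] gb(2,3) by auto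
    have "hd q \<noteq> last q" using qb bm by simp
    then obtain qm where qm: "q = b # qm @ [w]" using list_split_ends[OF qb(5)] qb(2,3) by auto
    have wr: "walk E (rev \<gamma>)" using walk_rev_edge[OF gb(1)] .
    have W: "walk E (rev \<gamma> @ tl q)" using walk_glue[OF wr qb(1)] gb qb by (simp add: last_rev)
    have Weq: "rev \<gamma> @ tl q = m # (rev gm @ [b] @ qm) @ [w]" using gm qm by simp
    have s1: "set gm \<inter> VS i = {}"
      using geodesic_to_closest_avoids[OF g m(2)] gm by (simp add: butlast_append)
    have s2: "set qm \<inter> VS i = {}" using av qm by (simp add: butlast_append)
    have "set (rev gm @ [b] @ qm) \<inter> VS i = {}" using s1 s2 False by auto
    then show False using no_walk_detour_from_piece[OF i, of m "rev gm @ [b] @ qm" w] W Weq m(1) w wm by simp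
  qed
qed

lemma proj_eqI:
  assumes i: "i \<in> I" and b: "b \<in> V" and m: "m \<in> VS i" "\<forall>w\<in>VS i. d b m \<le> d b w"
  shows "proj b i = m"
proof -
  have P: "\<forall>w\<in>VS i. w \<noteq> m \<longrightarrow> d b m < d b w"
  proof (intro ballI impI)
    fix w assume w: "w \<in> VS i" "w \<noteq> m"
    have wV: "w \<in> V" using piece_subset_V[OF i] w by auto
    obtain q where q: "geodesic E b w q" using geodesic_between[OF b wV] by blast
    have qb: "walk E q" "hd q = b" "last q = w" "length q = Suc (d b w)" "q \<noteq> []" using geodesicD[OF q] by auto
    have "\<exists>z\<in>set q. z \<in> VS i" using qb(3,5) w(1) by auto
    then obtain ys z zs where sp: "q = ys @ z # zs" "z \<in> VS i" "\<forall>y\<in>set ys. y \<notin> VS i"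
      by (rule split_list_first_propE)
    have k: "length ys < length q" using sp by simp
    have qk: "q ! length ys = z" using sp by simp
    have tk: "take (Suc (length ys)) q = ys @ [z]" using sp by simp
    have g2: "geodesic E b z (ys @ [z])" using geodesic_take[OF q k] qk tk by simp
    have "set (butlast (ys @ [z])) \<inter> VS i = {}" using sp(3) by auto
    then have zm: "z = m" using first_hit_eq_closest[OF i b m g2 sp(2)] by simp
    have "zs \<noteq> []" using sp qb(3) w(2) zm by auto
    then have "length ys < d b w" using qb(4) sp by (cases zs) auto
    moreover have "d b z = length ys" using geodesic_gdist_nth(1)[OF q k] qk by simp
    ultimately show "d b m < d b w" using zm by simp
  qed
  show ?thesis unfolding entry_def
  proof (rule the_equality)
    show "m \<in> VS i \<and> (\<forall>w\<in>VS i. w \<noteq> m \<longrightarrow> gdist E b m < gdist E b w)" using m(1) P by blast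
    fix v assume v: "v \<in> VS i \<and> (\<forall>w\<in>VS i. w \<noteq> v \<longrightarrow> gdist E b v < gdist E b w)"
    show "v = m"
    proof (rule ccontr)
      assume "v \<noteq> m"
      then have "d b m < d b v" "d b v < d b m" using P v m(1) by auto
      then show False by simp
    qed
  qed
qed

lemma proj_in_piece: "i \<in> I \<Longrightarrow> b \<in> V \<Longrightarrow> proj b i \<in> VS i"
  and proj_closest: "i \<in> I \<Longrightarrow> b \<in> V \<Longrightarrow> w \<in> VS i \<Longrightarrow> d b (proj b i) \<le> d b w"
  by (metis closest_in_piece_exists proj_eqI)+

lemma proj_first_hit:
  assumes i: "i \<in> I" and b: "b \<in> V" and q: "geodesic E b w q" and w: "w \<in> VS i"
    and av: "set (butlast q) \<inter> VS i = {}"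
  shows "w = proj b i"
proof -
  obtain m where m: "m \<in> VS i" "\<forall>w\<in>VS i. d b m \<le> d b w" using closest_in_piece_exists[OF i] by metis
  show ?thesis using first_hit_eq_closest[OF i b m q w av] proj_eqI[OF i b m] by simp
qed

lemma proj_first_index:
  assumes i: "i \<in> I" and b: "b \<in> V" and q: "geodesic E b y q" and k: "k < length q"
    and qk: "q!k \<in> VS i" and before: "\<forall>k'<k. q!k' \<notin> VS i"
  shows "q!k = proj b i"
proof -
  have "butlast (take (Suc k) q) = take k q" using k by (simp add: take_Suc_conv_app_nth)
  moreover have "set (take k q) \<inter> VS i = {}" using before by (auto simp: in_set_conv_nth)
  ultimately show ?thesis using proj_first_hit[OF i b geodesic_take[OF q k] qk] by simp
qed

lemma proj_last_index:
  assumes i: "i \<in> I" and x: "x \<in> V" and q: "geodesic E b x q" and k: "k < length q"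
    and qk: "q!k \<in> VS i" and after: "\<forall>k'. k < k' \<and> k' < length q \<longrightarrow> q!k' \<notin> VS i"
  shows "q!k = proj x i"
proof -
  have "butlast (rev (drop k q)) = rev (drop (Suc k) q)"
    using k by (simp add: drop_Suc tl_drop)
  moreover have "set (drop (Suc k) q) \<inter> VS i = {}"
    using after by (auto simp: in_set_conv_nth)
  ultimately show ?thesis
    using proj_first_hit[OF i x geodesic_rev_edge[OF geodesic_drop[OF q k]] qk] by simp
qed

lemma proj_eq_if_geodesic_avoids:
  assumes i: "i \<in> I" and x: "x \<in> V" and y: "y \<in> V" and g: "geodesic E x y p"
    and av: "set p \<inter> VS i = {}"
  shows "proj x i = proj y i"
proof (rule ccontr)
  define c where "c = proj x i"
  define c' where "c' = proj y i"
  assume "proj x i \<noteq> proj y i"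
  then have cc: "c \<noteq> c'" unfolding c_def c'_def by simp
  have cV: "c \<in> VS i" "c' \<in> VS i" using proj_in_piece[OF i x] proj_closest[OF i x] proj_in_piece[OF i y] proj_closest[OF i y] unfolding c_def c'_def by auto
  then have cV': "c \<in> V" "c' \<in> V" using piece_subset_V[OF i] by auto
  obtain \<gamma> where ga: "geodesic E x c \<gamma>" using geodesic_between[OF x cV'(1)] by blast
  obtain \<gamma>' where ga': "geodesic E y c' \<gamma>'" using geodesic_between[OF y cV'(2)] by blast
  have av1: "set (butlast \<gamma>) \<inter> VS i = {}" using geodesic_to_closest_avoids[OF ga] proj_closest[OF i x] unfolding c_def by blast
  have av2: "set (butlast \<gamma>') \<inter> VS i = {}" using geodesic_to_closest_avoids[OF ga'] proj_closest[OF i y] unfolding c'_def by blast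
  have pb: "walk E p" "hd p = x" "last p = y" "p \<noteq> []" using geodesicD[OF g] by auto
  have gb: "walk E \<gamma>" "hd \<gamma> = x" "last \<gamma> = c" "\<gamma> \<noteq> []" using geodesicD[OF ga] by auto
  have gb': "walk E \<gamma>'" "hd \<gamma>' = y" "last \<gamma>' = c'" "\<gamma>' \<noteq> []" using geodesicD[OF ga'] by auto
  have xV: "x \<notin> VS i" "y \<notin> VS i" using av pb by (auto intro: hd_in_set last_in_set)
  have "hd \<gamma> \<noteq> last \<gamma>" using gb xV cV by auto
  then obtain gm where gm: "\<gamma> = x # gm @ [c]" using list_split_ends[OF gb(4)] gb(2,3) by auto
  have "hd \<gamma>' \<noteq> last \<gamma>'" using gb' xV cV by auto
  then obtain gm' where gm': "\<gamma>' = y # gm' @ [c']" using list_split_ends[OF gb'(4)] gb'(2,3) by auto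
  have w1: "walk E (p @ tl \<gamma>')" using walk_glue[OF pb(1) gb'(1)] pb gb' by simp
  have w2: "walk E (rev \<gamma> @ tl (p @ tl \<gamma>'))"
    using walk_glue[OF walk_rev_edge[OF gb(1)] w1] gb pb by (simp add: last_rev)
  obtain p' where p': "p = x # p'" using pb by (cases p) auto
  have Weq: "rev \<gamma> @ tl (p @ tl \<gamma>') = c # (rev gm @ [x] @ p' @ gm') @ [c']"
    using gm gm' p' by simp
  have "set (rev gm @ [x] @ p' @ gm') \<inter> VS i = {}"
    using av1 av2 av gm gm' p' xV by (auto simp: butlast_append)
  then show False using no_walk_detour_from_piece[OF i, of c "rev gm @ [x] @ p' @ gm'" c'] w2 Weq cV cc by simp
qed

definition piece_edge_positions :: "'v list \<Rightarrow> 'i \<Rightarrow> nat set" where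
  "piece_edge_positions p i = {t. Suc t < length p \<and> ES i (p!t) (p!Suc t)}"

lemma card_piece_edges_on_geodesic:
  assumes i: "i \<in> I" and x: "x \<in> V" and y: "y \<in> V" and g: "geodesic E x y p"
  shows "card (piece_edge_positions p i) = d (proj x i) (proj y i)"
proof (cases "set p \<inter> VS i = {}")
  case True
  then have "piece_edge_positions p i = {}"
    unfolding piece_edge_positions_def using piece_edge_in_piece[OF i] by (auto dest!: nth_mem[of _ p, OF Suc_lessD])
  then show ?thesis using proj_eq_if_geodesic_avoids[OF i x y g True] by simp
next
  case False
  define K where "K = {k. k < length p \<and> p!k \<in> VS i}"
  have Kf: "finite K" unfolding K_def by simp
  have Kne: "K \<noteq> {}" using False unfolding K_def by (auto simp: in_set_conv_nth)
  define f where "f = Min K"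
  define l where "l = Max K"
  have fK: "f \<in> K" "l \<in> K" unfolding f_def l_def using Kf Kne by auto
  have fmin: "\<And>k. k \<in> K \<Longrightarrow> f \<le> k" unfolding f_def using Kf by simp
  have lmax: "\<And>k. k \<in> K \<Longrightarrow> k \<le> l" unfolding l_def using Kf by simp
  have fl: "f \<le> l" using fmin fK by simp
  have flen: "f < length p" "l < length p" using fK unfolding K_def by auto
  have "\<forall>k'<f. p!k' \<notin> VS i"
  proof (intro allI impI notI)
    fix k' assume "k' < f" "p!k' \<in> VS i"
    then have "k' \<in> K" using flen unfolding K_def by simp
    then show False using fmin \<open>k' < f\<close> by fastforce
  qed
  then have ef: "p!f = proj x i" using proj_first_index[OF i x g flen(1)] fK unfolding K_def by simp
  have "\<forall>k'. l < k' \<and> k' < length p \<longrightarrow> p!k' \<notin> VS i" using lmax unfolding K_def by fastforce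
  then have el: "p!l = proj y i" using proj_last_index[OF i y g flen(2)] fK unfolding K_def by simp
  have seteq: "piece_edge_positions p i = {f..<l}"
    unfolding piece_edge_positions_def
  proof (intro set_eqI iffI)
    fix t assume "t \<in> {t. Suc t < length p \<and> ES i (p!t) (p!Suc t)}"
    then have t: "Suc t < length p" "ES i (p!t) (p!Suc t)" by auto
    then have "t \<in> K" "Suc t \<in> K" using piece_edge_in_piece[OF i t(2)] unfolding K_def by auto
    then show "t \<in> {f..<l}" using fmin lmax by fastforce
  next
    fix t assume t: "t \<in> {f..<l}"
    have "p!f \<in> VS i" "p!l \<in> VS i" using fK unfolding K_def by auto
    then have "ES i (p!t) (p!Suc t)"
      using walk_segment_in_piece[OF i geodesic_walk[OF g] geodesic_distinct[OF g] fl flen(2)] t by auto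
    then show "t \<in> {t. Suc t < length p \<and> ES i (p!t) (p!Suc t)}" using t flen by simp
  qed
  then show ?thesis using geodesic_gdist_nth_nth[OF g fl flen(2)] ef el by simp
qed

section \<open>Bridges and the \<open>e\<close>-distance tree\<close>

lemma tid_sym: "tid V E I VS e a b \<Longrightarrow> tid V E I VS e b a"
  unfolding tid_def by metis

lemma tclass_self: "z \<in> tclass V E I VS e z"
  unfolding tclass_def by simp

lemma tclass_walk:
  shows "walk E p \<Longrightarrow> set p \<subseteq> V \<Longrightarrow> \<exists>W. walk (tadj V E I VS e) W \<and> hd W = tclass V E I VS e (hd p)
     \<and> last W = tclass V E I VS e (last p) \<and> length W \<le> length p"
proof (induction p)
  case Nil then show ?case by (simp add: walk_def)
next
  case (Cons u p)
  show ?case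
  proof (cases "p = []")
    case True then show ?thesis by (intro exI[of _ "[tclass V E I VS e u]"]) simp
  next
    case False
    have wp: "walk E p" using Cons.prems(1) walk_append_right[of E "[u]" p] False by simp
    obtain W where W: "walk (tadj V E I VS e) W" "hd W = tclass V E I VS e (hd p)"
      "last W = tclass V E I VS e (last p)" "length W \<le> length p"
      using Cons.IH[OF wp] Cons.prems(2) by auto
    have Wne: "W \<noteq> []" using W(1) by (simp add: walk_def)
    have euv: "E u (hd p)" using Cons.prems(1) False by (cases p) auto
    show ?thesis
    proof (cases "tclass V E I VS e u = tclass V E I VS e (hd p)")
      case True
      then show ?thesis using W False by (intro exI[of _ W]) auto
    next
      case neq: False
      have ta: "tadj V E I VS e (tclass V E I VS e u) (hd W)"
        unfolding tadj_def W(2)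
      proof (intro conjI)
        show "tclass V E I VS e u \<in> tclass V E I VS e ` V" using Cons.prems(2) by simp
        have "hd p \<in> V" using Cons.prems(2) hd_in_set[OF False] by auto
        then show "tclass V E I VS e (hd p) \<in> tclass V E I VS e ` V" by simp
        show "tclass V E I VS e u \<noteq> tclass V E I VS e (hd p)" using neq .
        show "\<exists>ua\<in>tclass V E I VS e u. \<exists>v\<in>tclass V E I VS e (hd p). E ua v"
          using tclass_self euv by blast
      qed
      have "walk (tadj V E I VS e) (tclass V E I VS e u # W)"
        using ta W(1) Wne by (cases W) auto
      then show ?thesis using W False Wne
        by (intro exI[of _ "tclass V E I VS e u # W"]) auto
    qed
  qed
qed

text \<open>\<open>crossed p z\<close> counts the bridges of \<open>p\<close> behind which \<open>z\<close> lies. It is constant on the classes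
  of \<open>T\<^sub>\<Gamma>\<close>, changes by at most one along an edge, and goes from \<open>0\<close> to the number of bridges
  along \<open>p\<close> itself; this bounds \<open>\<sigma>\<^sub>T\<close> from below.\<close>

definition beyond :: "'v list \<Rightarrow> nat \<Rightarrow> 'v \<Rightarrow> bool" where
  "beyond p t z \<longleftrightarrow> (\<exists>W. walk (avoiding (p!t) (p!Suc t)) W \<and> hd W = p!Suc t \<and> last W = z)"

definition bridge_positions :: "'v list \<Rightarrow> nat set" where
  "bridge_positions p = {t. Suc t < length p \<and> (\<forall>i\<in>I. \<not> ES i (p!t) (p!Suc t))}"

definition crossed :: "'v list \<Rightarrow> 'v \<Rightarrow> nat" where
  "crossed p z = card {t\<in>bridge_positions p. beyond p t z}"

lemma beyond_step: "beyond p t a \<Longrightarrow> avoiding (p!t) (p!Suc t) a b \<Longrightarrow> beyond p t b"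
proof -
  assume s: "beyond p t a" and av: "avoiding (p!t) (p!Suc t) a b"
  obtain W where W: "walk (avoiding (p!t) (p!Suc t)) W" "hd W = p!Suc t" "last W = a"
    using s unfolding beyond_def by blast
  have "walk (avoiding (p!t) (p!Suc t)) (W @ [b])" using walk_append_edge[OF W(1), of "[b]"] W av by simp
  moreover have "hd (W @ [b]) = p!Suc t" using W by (cases W) (auto simp: walk_def)
  ultimately show "beyond p t b" unfolding beyond_def by (intro exI[of _ "W @ [b]"]) simp
qed

lemma beyond_walk: "beyond p t a \<Longrightarrow> walk (avoiding (p!t) (p!Suc t)) W \<Longrightarrow> hd W = a \<Longrightarrow> beyond p t (last W)"
proof -
  assume s: "beyond p t a" and w: "walk (avoiding (p!t) (p!Suc t)) W" and h: "hd W = a"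
  obtain U where U: "walk (avoiding (p!t) (p!Suc t)) U" "hd U = p!Suc t" "last U = a"
    using s unfolding beyond_def by blast
  have Une: "U \<noteq> []" "W \<noteq> []" using U w by (auto simp: walk_def)
  have "walk (avoiding (p!t) (p!Suc t)) (U @ tl W)" using walk_glue[OF U(1) w] U h by simp
  moreover have "hd (U @ tl W) = p!Suc t" using U Une by simp
  moreover have "last (U @ tl W) = last W" using last_glue[OF Une] U h by simp
  ultimately show ?thesis unfolding beyond_def by blast
qed

lemma finite_bridge_positions: "finite (bridge_positions p)"
  unfolding bridge_positions_def by (rule finite_subset[of _ "{..<length p}"]) auto

lemma crossed_edge:
  assumes dp: "distinct p" and e: "E u v"
  shows "crossed p u \<le> crossed p v + 1"
proof -
  define A where "A = {t\<in>bridge_positions p. beyond p t u}"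
  define B where "B = {t\<in>bridge_positions p. beyond p t v}"
  define D where "D = {t\<in>bridge_positions p. (u = p!t \<and> v = p!Suc t) \<or> (u = p!Suc t \<and> v = p!t)}"
  have fin: "finite A" "finite B" "finite D" unfolding A_def B_def D_def using finite_bridge_positions by auto
  have sub: "A \<subseteq> B \<union> D"
  proof
    fix t assume t: "t \<in> A"
    show "t \<in> B \<union> D"
    proof (cases "t \<in> D")
      case False
      then have "avoiding (p!t) (p!Suc t) u v" unfolding avoiding_def D_def using e t A_def by auto
      then have "beyond p t v" using beyond_step t unfolding A_def by blast
      then show ?thesis using t unfolding A_def B_def by simp
    qed simp
  qed
  have "card D \<le> Suc 0"
  proof (subst card_le_Suc0_iff_eq[OF fin(3)], intro ballI)
    fix t1 t2 assume t: "t1 \<in> D" "t2 \<in> D"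
    then have l: "Suc t1 < length p" "Suc t2 < length p" unfolding D_def bridge_positions_def by auto
    have "p!t1 = p!t2 \<and> p!Suc t1 = p!Suc t2 \<or> p!t1 = p!Suc t2 \<and> p!Suc t1 = p!t2"
      using t unfolding D_def by auto
    then show "t1 = t2"
    proof
      assume "p!t1 = p!t2 \<and> p!Suc t1 = p!Suc t2"
      then show ?thesis using nth_eq_iff_index_eq[OF dp] l by auto
    next
      assume a: "p!t1 = p!Suc t2 \<and> p!Suc t1 = p!t2"
      then have "t1 = Suc t2" "Suc t1 = t2" using nth_eq_iff_index_eq[OF dp] l by auto
      then show ?thesis by simp
    qed
  qed
  moreover have "card A \<le> card B + card D"
    using card_mono[OF _ sub] fin card_Un_le[of B D] by (meson finite_UnI le_trans)
  ultimately show ?thesis unfolding crossed_def A_def[symmetric] B_def[symmetric] by simp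
qed

lemma crossed_tid:
  assumes "tid V E I VS e a b"
  shows "crossed p a = crossed p b"
proof -
  have key: "\<And>a b t. tid V E I VS e a b \<Longrightarrow> t \<in> bridge_positions p \<Longrightarrow> beyond p t a \<Longrightarrow> beyond p t b"
  proof -
    fix a b t assume ab: "tid V E I VS e a b" and t: "t \<in> bridge_positions p" and s: "beyond p t a"
    obtain i where i: "i \<in> I" "a \<in> VS i" "b \<in> VS i" using ab unfolding tid_def by blast
    obtain W where W: "walk (ES i) W" "hd W = a" "last W = b" using piece_walk_between[OF i] by blast
    have nb: "\<not> ES i (p!t) (p!Suc t)" using t i unfolding bridge_positions_def by auto
    have "walk (avoiding (p!t) (p!Suc t)) W"
    proof (rule walk_mono[OF W(1)])
      fix u v assume uv: "ES i u v"
      have "\<not> (u = p!Suc t \<and> v = p!t)" using nb uv piece_edge_sym[OF i(1)] by blast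
      then show "avoiding (p!t) (p!Suc t) u v" unfolding avoiding_def using uv nb piece_edge_edge[OF i(1)] by blast
    qed
    then have "beyond p t (last W)" using beyond_walk[OF s] W(2) by blast
    then show "beyond p t b" using W(3) by simp
  qed
  have "{t\<in>bridge_positions p. beyond p t a} = {t\<in>bridge_positions p. beyond p t b}"
  proof (intro set_eqI iffI)
    fix t assume "t \<in> {t\<in>bridge_positions p. beyond p t a}"
    then show "t \<in> {t\<in>bridge_positions p. beyond p t b}" using key[OF assms, of t] by simp
  next
    fix t assume "t \<in> {t\<in>bridge_positions p. beyond p t b}"
    then show "t \<in> {t\<in>bridge_positions p. beyond p t a}" using key[OF tid_sym[OF assms], of t] by simp
  qed
  then show ?thesis unfolding crossed_def by simp
qed

lemma crossed_rtranclp: "(tid V E I VS e)\<^sup>*\<^sup>* a b \<Longrightarrow> crossed p a = crossed p b"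
proof (induction rule: rtranclp_induct)
  case (step y z)
  then show ?case using crossed_tid[of e y z p] by simp
qed simp

lemma crossed_tclass:
  assumes "C \<in> tclass V E I VS e ` V" "a \<in> C" "b \<in> C"
  shows "crossed p a = crossed p b"
proof -
  obtain z where z: "C = tclass V E I VS e z" using assms(1) by blast
  have "(tid V E I VS e)\<^sup>*\<^sup>* z a" "(tid V E I VS e)\<^sup>*\<^sup>* z b" using assms(2,3) z unfolding tclass_def by auto
  then have "crossed p z = crossed p a" "crossed p z = crossed p b" using crossed_rtranclp by blast+
  then show ?thesis by simp
qed

lemma crossed_tadj_walk:
  assumes dp: "distinct p"
  shows "walk (tadj V E I VS e) W \<Longrightarrow> hd W \<in> tclass V E I VS e ` V \<Longrightarrow> u \<in> hd W \<Longrightarrow> v \<in> last W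
    \<Longrightarrow> crossed p v \<le> crossed p u + (length W - 1)"
proof (induction W arbitrary: u)
  case Nil then show ?case by (simp add: walk_def)
next
  case (Cons C W)
  show ?case
  proof (cases "W = []")
    case True
    then show ?thesis using Cons.prems crossed_tclass[of C e u v p] by simp
  next
    case False
    have ta: "tadj V E I VS e C (hd W)" using Cons.prems(1) False by (cases W) auto
    have wW: "walk (tadj V E I VS e) W" using Cons.prems(1) walk_append_right[of _ "[C]" W] False by simp
    obtain u' v' where uv: "u' \<in> C" "v' \<in> hd W" "E u' v'" using ta unfolding tadj_def by blast
    have hW: "hd W \<in> tclass V E I VS e ` V" using ta unfolding tadj_def by blast
    have "crossed p v \<le> crossed p v' + (length W - 1)" using Cons.IH[OF wW hW uv(2)] Cons.prems(4) False by simp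
    moreover have "crossed p v' \<le> crossed p u' + 1" using crossed_edge[OF dp edge_sym[OF uv(3)]] .
    moreover have "crossed p u' = crossed p u" using crossed_tclass[of C e u' u p] Cons.prems(2,3) uv(1) by simp
    ultimately show ?thesis using False by (cases W) auto
  qed
qed

lemma crossed_ends:
  assumes x: "x \<in> V" and g: "geodesic E x y p"
  shows "crossed p x = 0" "crossed p y = card (bridge_positions p)"
proof -
  have pb: "walk E p" "hd p = x" "last p = y" "p \<noteq> []" using geodesicD[OF g] by auto
  have dp: "distinct p" using geodesic_distinct[OF g] .
  have "\<not> beyond p t x" if t: "t \<in> bridge_positions p" for t
  proof
    assume "beyond p t x"
    have tl: "Suc t < length p" using t unfolding bridge_positions_def by simp
    have "beyond p t (last (take (Suc t) p))"
      using beyond_walk[OF \<open>beyond p t x\<close> walk_avoiding_take[OF pb(1) dp tl]] pb by simp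
    then obtain W where "walk (avoiding (p!t) (p!Suc t)) W" "hd W = p!Suc t" "last W = p!t"
      unfolding beyond_def using last_take_Suc[of t p] tl by auto
    moreover have "\<forall>i\<in>I. \<not> ES i (p!t) (p!Suc t)" using t unfolding bridge_positions_def by simp
    ultimately show False using bridge_no_bypass walk_nth[OF pb(1) tl] by blast
  qed
  then show "crossed p x = 0" unfolding crossed_def by (simp add: finite_bridge_positions)
  have "beyond p t y" if t: "t \<in> bridge_positions p" for t
  proof -
    have tl: "Suc t < length p" using t unfolding bridge_positions_def by simp
    then show ?thesis using walk_avoiding_drop[OF pb(1) dp tl] pb unfolding beyond_def
      by (intro exI[of _ "drop (Suc t) p"]) (simp add: hd_drop_conv_nth)
  qed
  then show "crossed p y = card (bridge_positions p)" unfolding crossed_def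
    by (metis (mono_tags, lifting) Collect_cong Collect_mem_eq)
qed

lemma sigma_T_le_d:
  assumes x: "x \<in> V" and y: "y \<in> V"
  shows "sigma_T V E I VS e x y \<le> d x y"
proof -
  obtain p where g: "geodesic E x y p" using geodesic_between[OF x y] .
  obtain W where "walk (tadj V E I VS e) W" "hd W = tclass V E I VS e x"
     "last W = tclass V E I VS e y" "length W \<le> length p"
    using tclass_walk[OF geodesic_walk[OF g] geodesic_in_V[OF g x], of e] geodesicD[OF g] by auto
  then show ?thesis unfolding sigma_T_def using gdist_le_walk geodesic_length[OF g] by fastforce
qed

lemma card_bridge_positions_le_sigma_T:
  assumes x: "x \<in> V" and g: "geodesic E x y p"
  shows "card (bridge_positions p) \<le> sigma_T V E I VS e x y"
proof -
  obtain W where "walk (tadj V E I VS e) W" "hd W = tclass V E I VS e x"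
     "last W = tclass V E I VS e y"
    using tclass_walk[OF geodesic_walk[OF g] geodesic_in_V[OF g x], of e] geodesicD[OF g] by auto
  then obtain W0 where W0: "geodesic (tadj V E I VS e) (tclass V E I VS e x) (tclass V E I VS e y) W0"
    by (rule geodesic_exists)
  have "crossed p y \<le> crossed p x + (length W0 - 1)"
    using crossed_tadj_walk[OF geodesic_distinct[OF g] geodesic_walk[OF W0]] geodesicD[OF W0] x
      tclass_self by simp
  then show ?thesis using crossed_ends[OF x g] geodesic_length[OF W0] unfolding sigma_T_def by simp
qed

lemma finite_pieces_with_edge: "finite {i\<in>I. ES i u v}"
proof -
  have "{i\<in>I. ES i u v} \<subseteq> {SOME i. i \<in> I \<and> ES i u v}"
    using piece_edge_unique by (metis (mono_tags, lifting) mem_Collect_eq singletonI someI subsetI)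
  then show ?thesis by (rule finite_subset) simp
qed

lemma finite_proj_differ:
  assumes x: "x \<in> V" and y: "y \<in> V"
  shows "finite {i\<in>I. proj x i \<noteq> proj y i}"
proof -
  obtain p where g: "geodesic E x y p" using geodesic_between[OF x y] .
  have "{i\<in>I. proj x i \<noteq> proj y i} \<subseteq> (\<Union>t<length p. {i\<in>I. ES i (p!t) (p!Suc t)})"
  proof
    fix i assume i: "i \<in> {i\<in>I. proj x i \<noteq> proj y i}"
    then have "proj x i \<in> V" "proj y i \<in> V"
      using proj_in_piece[OF _ x] proj_in_piece[OF _ y] piece_subset_V by blast+
    then have "d (proj x i) (proj y i) \<noteq> 0" using d_eq_0_iff i by blast
    then have "piece_edge_positions p i \<noteq> {}" using card_piece_edges_on_geodesic[OF _ x y g] i by force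
    then show "i \<in> (\<Union>t<length p. {i\<in>I. ES i (p!t) (p!Suc t)})"
      using i unfolding piece_edge_positions_def by auto
  qed
  moreover have "finite (\<Union>t<length p. {i\<in>I. ES i (p!t) (p!Suc t)})"
    by (intro finite_UN_I finite_lessThan finite_pieces_with_edge)
  ultimately show ?thesis by (rule finite_subset)
qed

lemma d_eq_sum_proj_plus_bridges:
  assumes x: "x \<in> V" and y: "y \<in> V" and g: "geodesic E x y p"
  shows "d x y = (\<Sum>i\<in>{i\<in>I. proj x i \<noteq> proj y i}. d (proj x i) (proj y i)) + card (bridge_positions p)"
proof -
  define S where "S = {i\<in>I. proj x i \<noteq> proj y i}"
  define P where "P = piece_edge_positions p"
  define PE where "PE = {t. Suc t < length p \<and> (\<exists>i\<in>I. ES i (p!t) (p!Suc t))}"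
  have Pfin: "finite (P i)" for i
    unfolding P_def piece_edge_positions_def by (rule finite_subset[of _ "{..<length p}"]) auto
  have cardP: "card (P i) = d (proj x i) (proj y i)" if "i \<in> I" for i
    unfolding P_def using card_piece_edges_on_geodesic[OF that x y g] .
  have "PE = \<Union> (P ` S)"
  proof (intro set_eqI iffI)
    fix t assume "t \<in> PE"
    then obtain i where i: "i \<in> I" "t \<in> P i" unfolding PE_def P_def piece_edge_positions_def by blast
    then have "card (P i) \<noteq> 0" using Pfin by auto
    then have "proj x i \<noteq> proj y i" using cardP[OF i(1)] by auto
    then show "t \<in> \<Union> (P ` S)" using i unfolding S_def by blast
  next
    fix t assume "t \<in> \<Union> (P ` S)"
    then show "t \<in> PE" unfolding PE_def P_def S_def piece_edge_positions_def by blast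
  qed
  moreover have "\<forall>i\<in>S. \<forall>j\<in>S. i \<noteq> j \<longrightarrow> P i \<inter> P j = {}"
    using piece_edge_unique unfolding P_def S_def piece_edge_positions_def by blast
  ultimately have "card PE = (\<Sum>i\<in>S. card (P i))"
    using card_UN_disjoint[of S P] finite_proj_differ[OF x y] Pfin unfolding S_def by simp
  also have "\<dots> = (\<Sum>i\<in>S. d (proj x i) (proj y i))" using cardP unfolding S_def by simp
  finally have cPE: "card PE = (\<Sum>i\<in>S. d (proj x i) (proj y i))" .
  have split: "{..<d x y} = PE \<union> bridge_positions p"
    unfolding PE_def bridge_positions_def using geodesic_length[OF g] by auto
  have disj: "PE \<inter> bridge_positions p = {}" unfolding PE_def bridge_positions_def by auto
  have "d x y = card (PE \<union> bridge_positions p)" using split by (metis card_lessThan)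
  also have "\<dots> = card PE + card (bridge_positions p)"
    using card_Un_disjoint[OF _ _ disj] split by (metis finite_Un finite_lessThan)
  finally have "d x y = card PE + card (bridge_positions p)" .
  then show ?thesis using cPE unfolding S_def by simp
qed

section \<open>Decompositions of geodesics from \<open>e\<close>\<close>

lemma bridge_on_all_geodesics:
  assumes g0: "geodesic E e x p0" and g: "geodesic E e x p" and t: "Suc t < length p0"
    and bridge: "\<forall>i\<in>I. \<not> ES i (p0!t) (p0!Suc t)"
  shows "p!t = p0!t \<and> p!Suc t = p0!Suc t"
proof (rule ccontr)
  assume ne: "\<not> (p!t = p0!t \<and> p!Suc t = p0!Suc t)"
  define u where "u = p0!t"
  define v where "v = p0!Suc t"
  have p0: "walk E p0" "distinct p0" "hd p0 = e" "last p0 = x"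
    using geodesicD[OF g0] geodesic_distinct[OF g0] by auto
  have du: "d e u = t" "d e v = Suc t" unfolding u_def v_def using geodesic_gdist_nth(1)[OF g0] t by auto
  have "avoiding u v (p!k) (p!Suc k)" if k: "Suc k < length p" for k
  proof -
    have "d e (p!k) = k" "d e (p!Suc k) = Suc k" using geodesic_gdist_nth(1)[OF g] k by auto
    then show ?thesis unfolding avoiding_def using walk_nth[OF geodesic_walk[OF g] k] ne du
      unfolding u_def v_def by auto
  qed
  then have "walk (avoiding u v) p" using geodesic_not_Nil[OF g] unfolding walk_def by blast
  then have reversed: "walk (avoiding u v) (rev p)" using walk_rev[of "avoiding u v" p] avoiding_sym by blast
  have front: "walk (avoiding u v) (take (Suc t) p0)" and tail: "walk (avoiding u v) (drop (Suc t) p0)"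
    using walk_avoiding_take[OF p0(1,2) t] walk_avoiding_drop[OF p0(1,2) t] unfolding u_def v_def .
  define W where "W = (drop (Suc t) p0 @ tl (rev p)) @ tl (take (Suc t) p0)"
  have ends: "hd (drop (Suc t) p0) = v" "last (drop (Suc t) p0) = x"
    "hd (take (Suc t) p0) = e" "last (take (Suc t) p0) = u"
    unfolding u_def v_def using t p0(3,4) last_take_Suc[of t p0] by (simp_all add: hd_drop_conv_nth)
  have rev_ends: "hd (rev p) = x" "last (rev p) = e" "rev p \<noteq> []"
    using geodesicD[OF g] by (auto simp: hd_rev last_rev)
  have tail_back: "walk (avoiding u v) (drop (Suc t) p0 @ tl (rev p))"
    "last (drop (Suc t) p0 @ tl (rev p)) = e"
    using walk_glue[OF tail reversed] last_glue[OF walk_not_Nil[OF tail] rev_ends(3)] ends rev_ends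
    by simp_all
  have "walk (avoiding u v) W" "hd W = v" "last W = u"
    unfolding W_def
    using walk_glue[OF tail_back(1) front] last_glue[OF walk_not_Nil[OF tail_back(1)] walk_not_Nil[OF front]]
      tail_back(2) ends walk_not_Nil[OF tail] by simp_all
  moreover have "E u v" unfolding u_def v_def using walk_nth[OF p0(1) t] .
  ultimately show False using bridge_no_bypass bridge unfolding u_def v_def by blast
qed

definition piece_run :: "'v \<Rightarrow> 'v list \<Rightarrow> 'i \<Rightarrow> 'v \<Rightarrow> nat \<Rightarrow> nat \<Rightarrow> bool" where
  "piece_run e p i c a b \<longleftrightarrow> a \<le> b \<and> p!a = proj e i \<and> p!b = c \<and>
     (\<forall>m. a \<le> m \<and> m \<le> b \<longrightarrow> p!m \<in> VS i) \<and> (\<forall>m. a \<le> m \<and> m < b \<longrightarrow> ES i (p!m) (p!Suc m))"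

definition run_gap :: "'v list \<Rightarrow> nat \<Rightarrow> nat \<Rightarrow> bool" where
  "run_gap p b a \<longleftrightarrow> b \<le> a \<and> a \<le> Suc b \<and> (a = Suc b \<longrightarrow> (\<forall>i\<in>I. \<not> ES i (p!b) (p!a)))"

definition decomp_runs ::
  "'v \<Rightarrow> 'v list \<Rightarrow> 'i list \<Rightarrow> 'v list \<Rightarrow> (nat \<Rightarrow> nat) \<Rightarrow> (nat \<Rightarrow> nat) \<Rightarrow> bool" where
  "decomp_runs e p ixs xs a b \<longleftrightarrow> a 0 = 0 \<and> b (length ixs - 1) = length p - 1 \<and>
     (\<forall>j<length ixs. piece_run e p (ixs!j) (xs!j) (a j) (b j)) \<and>
     (\<forall>j. Suc j < length ixs \<longrightarrow> run_gap p (b j) (a (Suc j)))"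

lemma decomp_iff_runs:
  "decomp V E I VS ES e x ixs xs \<longleftrightarrow>
     ixs \<noteq> [] \<and> length xs = length ixs \<and> distinct ixs \<and> set ixs \<subseteq> I \<and> last xs = x \<and>
     (\<forall>p. geodesic E e x p \<longrightarrow> (\<exists>a b. decomp_runs e p ixs xs a b))"
  unfolding decomp_def decomp_runs_def piece_run_def run_gap_def by blast

lemma geodesic_run_into_piece:
  assumes e: "e \<in> V" and i: "i \<in> I" and g: "geodesic E e x p" and x: "x \<in> VS i"
  shows "piece_run e p i x (d e (proj e i)) (length p - 1)"
proof -
  have last: "length p - 1 < length p" "p ! (length p - 1) = x"
    using geodesicD[OF g] by (auto simp: last_conv_nth)
  then have "\<exists>k. k < length p \<and> p!k \<in> VS i" using x by metis
  then obtain k where k: "k < length p" "p!k \<in> VS i" "\<forall>k'<k. \<not> (k' < length p \<and> p!k' \<in> VS i)"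
    by (auto simp: exists_least_iff[of "\<lambda>k. k < length p \<and> p!k \<in> VS i"])
  have pk: "p!k = proj e i" using proj_first_index[OF i e g k(1,2)] k(3) k(1) by auto
  then have dk: "d e (proj e i) = k" using geodesic_gdist_nth(1)[OF g k(1)] by simp
  have "k \<le> length p - 1" using k(1) by simp
  moreover have "p ! (length p - 1) \<in> VS i" using last x by simp
  ultimately show ?thesis
    using walk_segment_in_piece[OF i geodesic_walk[OF g] geodesic_distinct[OF g] _ last(1) k(2)]
    unfolding piece_run_def using dk pk last by auto
qed

lemma decomp_wf:
  "decomp V E I VS ES e x ixs xs \<Longrightarrow>
     ixs \<noteq> [] \<and> length xs = length ixs \<and> distinct ixs \<and> set ixs \<subseteq> I \<and> last xs = x"
  unfolding decomp_def by blast

lemma decomp_runs_bounds: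
  assumes r: "decomp_runs e p ixs xs a b" and j: "j < length ixs"
  shows "a j \<le> b j" "b j \<le> length p - 1"
proof -
  have ab: "\<forall>j<length ixs. a j \<le> b j" and ba: "\<forall>j. Suc j < length ixs \<longrightarrow> b j \<le> a (Suc j)"
    using r unfolding decomp_runs_def piece_run_def run_gap_def by auto
  show "a j \<le> b j" using ab j by simp
  have "b j \<le> b (length ixs - 1)" using interleaved_b_mono[OF ab ba, of j "length ixs - 1"] j by simp
  then show "b j \<le> length p - 1" using r unfolding decomp_runs_def by simp
qed

lemma decomp_runs_start:
  assumes g: "geodesic E e x p" and r: "decomp_runs e p ixs xs a b" and j: "j < length ixs"
  shows "a j = d e (proj e (ixs!j))"
proof -
  have "a j < length p" using decomp_runs_bounds[OF r j] geodesic_not_Nil[OF g] by (cases p) auto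
  moreover have "p ! a j = proj e (ixs!j)" using r j unfolding decomp_runs_def piece_run_def by auto
  ultimately show ?thesis using geodesic_gdist_nth(1)[OF g] by metis
qed

lemma decomp_runs_piece_edge:
  assumes r: "decomp_runs e p ixs xs a b" and ne: "ixs \<noteq> []" and sI: "set ixs \<subseteq> I"
    and i: "i \<in> I" and t: "Suc t < length p" and es: "ES i (p!t) (p!Suc t)"
  obtains j where "j < length ixs" "ixs!j = i" "a j \<le> t" "t < b j"
proof -
  have ab: "\<forall>j<length ixs. a j \<le> b j"
    and ba: "\<forall>j. Suc j < length ixs \<longrightarrow> b j \<le> a (Suc j) \<and> a (Suc j) \<le> Suc (b j)"
    and a0: "a 0 = 0" and bL: "b (length ixs - 1) = length p - 1"
    using r unfolding decomp_runs_def piece_run_def run_gap_def by auto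
  have "0 < length ixs" "t < length p - 1" using ne t by auto
  from interleaved_cover[OF ab ba a0 bL this]
  consider j where "j < length ixs" "a j \<le> t" "t < b j"
    | j where "Suc j < length ixs" "b j = t" "a (Suc j) = Suc t"
    by blast
  then show ?thesis
  proof cases
    case (1 j)
    then have "ES (ixs!j) (p!t) (p!Suc t)" using r unfolding decomp_runs_def piece_run_def by auto
    moreover have "ixs!j \<in> I" using sI 1(1) by auto
    ultimately have "ixs!j = i" using piece_edge_unique[OF _ i _ es] by blast
    then show ?thesis using that 1 by blast
  next
    case (2 j)
    then have "\<forall>i\<in>I. \<not> ES i (p!t) (p!Suc t)" using r unfolding decomp_runs_def run_gap_def by auto
    then show ?thesis using i es by blast
  qed
qed

lemma decomp_runs_leave_piece:
  assumes g: "geodesic E e x p" and r: "decomp_runs e p ixs xs a b" and ne: "ixs \<noteq> []"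
    and sI: "set ixs \<subseteq> I" and i: "i \<in> I" and k: "k < length p" "p!k \<in> VS i"
    and no_run: "\<And>j. j < length ixs \<Longrightarrow> ixs!j = i \<Longrightarrow> a j \<le> k \<Longrightarrow> k < b j \<Longrightarrow> False"
  shows "\<forall>k'. k < k' \<and> k' < length p \<longrightarrow> p!k' \<notin> VS i"
proof (intro allI impI notI)
  fix k' assume k': "k < k' \<and> k' < length p" "p!k' \<in> VS i"
  have "ES i (p!k) (p!Suc k)"
    using walk_segment_in_piece[OF i geodesic_walk[OF g] geodesic_distinct[OF g], of k k'] k k' by auto
  moreover have "Suc k < length p" using k' by simp
  ultimately show False using decomp_runs_piece_edge[OF r ne sI i] no_run by metis
qed

lemma decomp_point_eq_proj:
  assumes e: "e \<in> V" and x: "x \<in> V" and dec: "decomp V E I VS ES e x ixs xs"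
    and j: "j < length ixs"
  shows "xs!j = proj x (ixs!j)"
proof -
  have wf: "ixs \<noteq> []" "distinct ixs" "set ixs \<subseteq> I" using decomp_wf[OF dec] by auto
  obtain p where g: "geodesic E e x p" using geodesic_between[OF e x] .
  obtain a b where r: "decomp_runs e p ixs xs a b" using dec g unfolding decomp_iff_runs by blast
  have i: "ixs!j \<in> I" using wf(3) j by auto
  have run: "piece_run e p (ixs!j) (xs!j) (a j) (b j)" using r j unfolding decomp_runs_def by blast
  have bj: "b j < length p" using decomp_runs_bounds[OF r j] geodesic_not_Nil[OF g] by (cases p) auto
  have pbj: "p!(b j) = xs!j" "p!(b j) \<in> VS (ixs!j)" using run unfolding piece_run_def by auto
  have "\<forall>k'. b j < k' \<and> k' < length p \<longrightarrow> p!k' \<notin> VS (ixs!j)"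
    using decomp_runs_leave_piece[OF g r wf(1,3) i bj pbj(2)] j nth_eq_iff_index_eq[OF wf(2)] by blast
  then show ?thesis using proj_last_index[OF i x g bj pbj(2)] pbj(1) by simp
qed

lemma proj_eq_if_not_in_decomp:
  assumes e: "e \<in> V" and x: "x \<in> V" and dec: "decomp V E I VS ES e x ixs xs"
    and i: "i \<in> I" and ni: "i \<notin> set ixs"
  shows "proj e i = proj x i"
proof -
  have wf: "ixs \<noteq> []" "set ixs \<subseteq> I" using decomp_wf[OF dec] by auto
  obtain p where g: "geodesic E e x p" using geodesic_between[OF e x] .
  obtain a b where r: "decomp_runs e p ixs xs a b" using dec g unfolding decomp_iff_runs by blast
  show ?thesis
  proof (cases "\<exists>k. k < length p \<and> p!k \<in> VS i")
    case True
    then obtain k where k: "k < length p" "p!k \<in> VS i" "\<forall>k'<k. \<not> (k' < length p \<and> p!k' \<in> VS i)"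
      by (auto simp: exists_least_iff[of "\<lambda>k. k < length p \<and> p!k \<in> VS i"])
    have "p!k = proj e i" using proj_first_index[OF i e g k(1,2)] k(1,3) by auto
    moreover have "\<forall>k'. k < k' \<and> k' < length p \<longrightarrow> p!k' \<notin> VS i"
      using decomp_runs_leave_piece[OF g r wf i k(1,2)] ni nth_mem by blast
    then have "p!k = proj x i" using proj_last_index[OF i x g k(1,2)] by simp
    ultimately show ?thesis by simp
  next
    case False
    then have "set p \<inter> VS i = {}" by (auto simp: in_set_conv_nth)
    then show ?thesis using proj_eq_if_geodesic_avoids[OF i e x g] by simp
  qed
qed

lemma piece_run_take: "b < n \<Longrightarrow> piece_run e (take n p) i c a b \<longleftrightarrow> piece_run e p i c a b"
  unfolding piece_run_def by auto

lemma run_gap_take: "a < n \<Longrightarrow> run_gap (take n p) b a \<longleftrightarrow> run_gap p b a"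
  unfolding run_gap_def by auto

lemma decomp_runs_snoc:
  assumes r: "decomp_runs e (take (Suc t) p) ixs xs a b" and ne: "ixs \<noteq> []"
    and len: "length xs = length ixs" and t: "t < length p"
    and run: "piece_run e p i c s (length p - 1)" and gap: "run_gap p t s"
  shows "decomp_runs e p (ixs @ [i]) (xs @ [c])
    (\<lambda>j. if j < length ixs then a j else s) (\<lambda>j. if j < length ixs then b j else length p - 1)"
proof -
  let ?L = "length ixs"
  have b_le: "a j \<le> b j" "b j \<le> t" if "j < ?L" for j
    using decomp_runs_bounds[OF r that] t by auto
  have bL: "b (?L - 1) = t" using r t unfolding decomp_runs_def by simp
  have runs: "piece_run e p (ixs!j) (xs!j) (a j) (b j)" if "j < ?L" for j
    using r that piece_run_take[of "b j" "Suc t"] b_le[OF that] unfolding decomp_runs_def by auto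
  have gaps: "run_gap p (b j) (a (Suc j))" if "Suc j < ?L" for j
    using r that run_gap_take[of "a (Suc j)" "Suc t"] b_le[OF that] unfolding decomp_runs_def by auto
  show ?thesis
    unfolding decomp_runs_def
  proof (intro conjI allI impI)
    show "(if 0 < ?L then a 0 else s) = 0" using r ne unfolding decomp_runs_def by simp
    show "(if length (ixs @ [i]) - 1 < ?L then b (length (ixs @ [i]) - 1) else length p - 1) = length p - 1"
      by simp
  next
    fix j assume "j < length (ixs @ [i])"
    then consider "j < ?L" | "j = ?L" by fastforce
    then show "piece_run e p ((ixs @ [i])!j) ((xs @ [c])!j)
      (if j < ?L then a j else s) (if j < ?L then b j else length p - 1)"
      by cases (use runs run len in \<open>auto simp: nth_append\<close>)
  next
    fix j assume "Suc j < length (ixs @ [i])"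
    then consider "Suc j < ?L" | "j = ?L - 1" by fastforce
    then show "run_gap p (if j < ?L then b j else length p - 1) (if Suc j < ?L then a (Suc j) else s)"
      by cases (use gaps gap bL ne in auto)
  qed
qed

lemma decomp_snoc:
  assumes dec: "decomp V E I VS ES e y ixs xs" and i: "i \<in> I" "i \<notin> set ixs"
    and runs: "\<And>p. geodesic E e x p \<Longrightarrow> p!t = y \<and> piece_run e p i x s (length p - 1) \<and> run_gap p t s"
  shows "decomp V E I VS ES e x (ixs @ [i]) (xs @ [x])"
proof -
  have wf: "ixs \<noteq> []" "length xs = length ixs" "distinct ixs" "set ixs \<subseteq> I"
    using decomp_wf[OF dec] by auto
  have "\<exists>a b. decomp_runs e p (ixs @ [i]) (xs @ [x]) a b" if g: "geodesic E e x p" for p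
  proof -
    have pt: "p!t = y" and run: "piece_run e p i x s (length p - 1)" and gap: "run_gap p t s"
      using runs[OF g] by auto
    have t: "t < length p"
      using run gap geodesic_not_Nil[OF g] unfolding piece_run_def run_gap_def by (cases p) auto
    obtain a b where "decomp_runs e (take (Suc t) p) ixs xs a b"
      using dec geodesic_take[OF g t] pt unfolding decomp_iff_runs by auto
    from decomp_runs_snoc[OF this wf(1,2) t run gap] show ?thesis by blast
  qed
  then show ?thesis using wf i unfolding decomp_iff_runs by auto
qed

lemma not_in_decomp_if_far:
  assumes e: "e \<in> V" and y: "y \<in> V" and dec: "decomp V E I VS ES e y ixs xs"
    and far: "d e y < d e (proj e i)"
  shows "i \<notin> set ixs"
proof
  assume "i \<in> set ixs"
  then obtain j where j: "j < length ixs" "ixs!j = i" by (metis in_set_conv_nth)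
  obtain p where g: "geodesic E e y p" using geodesic_between[OF e y] .
  obtain a b where r: "decomp_runs e p ixs xs a b" using dec g unfolding decomp_iff_runs by blast
  have "a j = d e (proj e i)" using decomp_runs_start[OF g r j(1)] j(2) by simp
  moreover have "a j \<le> d e y" using decomp_runs_bounds[OF r j(1)] geodesic_length[OF g] by simp
  ultimately show False using far by simp
qed

text \<open>Decompositions are not unique: a run of length 0 at the last vertex can be appended.
  The normal form below excludes this when the geodesics arrive through an edge of a piece; the
  induction in \<open>decomp_exists\<close> needs it to keep the piece indices distinct.\<close>

definition tail_nondegenerate :: "'v \<Rightarrow> 'v \<Rightarrow> 'i list \<Rightarrow> bool" where
  "tail_nondegenerate e x ixs \<longleftrightarrow>
     (\<forall>p i. geodesic E e x p \<longrightarrow> 2 \<le> length p \<longrightarrow> i \<in> I \<longrightarrow> ES i (p!(length p - 2)) x \<longrightarrow>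
        d e (proj e (last ixs)) < d e x)"

lemma decomp_single_piece:
  assumes e: "e \<in> V" and i: "i \<in> I" and x: "x \<in> VS i" and base: "proj e i = e"
  shows "decomp V E I VS ES e x [i] [x]"
  unfolding decomp_iff_runs
proof (intro conjI allI impI)
  fix p assume g: "geodesic E e x p"
  have "piece_run e p i x 0 (length p - 1)" using geodesic_run_into_piece[OF e i g x] base by simp
  then have "decomp_runs e p [i] [x] (\<lambda>_. 0) (\<lambda>_. length p - 1)" unfolding decomp_runs_def by simp
  then show "\<exists>a b. decomp_runs e p [i] [x] a b" by blast
qed (use i in auto)

lemma decomp_extend_bridge:
  assumes e: "e \<in> V" and i: "i \<in> I" and x: "x \<in> VS i" and g0: "geodesic E e x p0"
    and k: "0 < d e (proj e i)"
    and dec: "decomp V E I VS ES e (p0 ! (d e (proj e i) - 1)) ixs xs"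
    and bridge: "\<forall>i'\<in>I. \<not> ES i' (p0 ! (d e (proj e i) - 1)) (proj e i)"
  shows "decomp V E I VS ES e x (ixs @ [i]) (xs @ [x])"
proof -
  define k where "k = d e (proj e i)"
  define w where "w = p0 ! (k - 1)"
  have run0: "piece_run e p0 i x k (length p0 - 1)" using geodesic_run_into_piece[OF e i g0 x] k_def by simp
  then have kl: "Suc (k - 1) < length p0" "p0 ! Suc (k - 1) = proj e i"
    using k geodesic_not_Nil[OF g0] unfolding k_def piece_run_def by auto
  have w: "w \<in> V" "d e w = k - 1"
    using geodesic_in_V[OF g0 e] geodesic_gdist_nth(1)[OF g0, of "k - 1"] kl(1) unfolding w_def by auto
  have ni: "i \<notin> set ixs"
    using not_in_decomp_if_far[OF e w(1)] dec k w(2) unfolding w_def k_def by simp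
  show ?thesis
  proof (rule decomp_snoc[OF dec i ni, where t = "k - 1" and s = k])
    fix p assume g: "geodesic E e x p"
    have run: "piece_run e p i x k (length p - 1)" using geodesic_run_into_piece[OF e i g x] k_def by simp
    have "p ! (k - 1) = w"
      using bridge_on_all_geodesics[OF g0 g kl(1)] bridge kl(2) unfolding w_def k_def by simp
    moreover have "run_gap p (k - 1) k"
      using run bridge k \<open>p ! (k - 1) = w\<close> unfolding run_gap_def piece_run_def w_def k_def by auto
    ultimately show "p ! (k - 1) = p0 ! (d e (proj e i) - 1) \<and> piece_run e p i x k (length p - 1)
      \<and> run_gap p (k - 1) k" using run unfolding w_def k_def by simp
  qed
qed

lemma decomp_extend_piece_edge:
  assumes e: "e \<in> V" and i: "i \<in> I" and x: "x \<in> VS i" and g0: "geodesic E e x p0"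
    and k: "0 < d e (proj e i)"
    and edge: "i' \<in> I" "ES i' (p0 ! (d e (proj e i) - 1)) (proj e i)"
    and dec: "decomp V E I VS ES e (proj e i) ixs xs"
    and nd: "tail_nondegenerate e (proj e i) ixs"
  shows "decomp V E I VS ES e x (ixs @ [i]) (xs @ [x])"
proof -
  define k where "k = d e (proj e i)"
  have run0: "piece_run e p0 i x k (length p0 - 1)" using geodesic_run_into_piece[OF e i g0 x] k_def by simp
  then have kl: "k < length p0" "p0 ! k = proj e i"
    using geodesic_length[OF g0] unfolding piece_run_def by auto
  define q0 where "q0 = take (Suc k) p0"
  have gq: "geodesic E e (proj e i) q0" unfolding q0_def using geodesic_take[OF g0 kl(1)] kl(2) by simp
  have "length q0 = Suc k" "q0 ! (length q0 - 2) = p0 ! (k - 1)"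
    unfolding q0_def using kl(1) k unfolding k_def by auto
  then have last_close: "d e (proj e (last ixs)) < k"
    using nd gq edge k unfolding tail_nondegenerate_def k_def by fastforce
  have ni: "i \<notin> set ixs"
  proof
    assume "i \<in> set ixs"
    then obtain j where j: "j < length ixs" "ixs!j = i" by (metis in_set_conv_nth)
    have wf: "ixs \<noteq> []" using decomp_wf[OF dec] by simp
    obtain a b where r: "decomp_runs e q0 ixs xs a b" using dec gq unfolding decomp_iff_runs by blast
    define L where "L = length ixs - 1"
    have L: "L < length ixs" "ixs!L = last ixs" unfolding L_def using wf by (auto simp: last_conv_nth)
    have aj: "a j = k" using decomp_runs_start[OF gq r j(1)] j(2) k_def by simp
    have aL: "a L < k" using decomp_runs_start[OF gq r L(1)] L(2) last_close by simp
    then have "j \<noteq> L" using aj by auto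
    then have "j < L" using j(1) unfolding L_def by simp
    moreover have "\<forall>j<length ixs. a j \<le> b j" "\<forall>j. Suc j < length ixs \<longrightarrow> b j \<le> a (Suc j)"
      using r unfolding decomp_runs_def piece_run_def run_gap_def by auto
    ultimately have "b j \<le> a L" using interleaved_b_le_a L(1) by blast
    then show False using decomp_runs_bounds(1)[OF r j(1)] aj aL by simp
  qed
  show ?thesis
  proof (rule decomp_snoc[OF dec i ni, where t = k and s = k])
    fix p assume g: "geodesic E e x p"
    have "piece_run e p i x k (length p - 1)" using geodesic_run_into_piece[OF e i g x] k_def by simp
    then show "p ! k = proj e i \<and> piece_run e p i x k (length p - 1) \<and> run_gap p k k"
      unfolding piece_run_def run_gap_def by auto
  qed
qed

lemma decomp_exists_base:
  assumes e: "e \<in> V"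
  shows "\<exists>ixs xs. decomp V E I VS ES e e ixs xs \<and> tail_nondegenerate e e ixs"
proof -
  obtain k where k: "k \<in> I" "e \<in> VS k" using vertex_in_piece[OF e] by blast
  have "proj e k = e"
    using proj_closest[OF k(1) e k(2)] d_eq_0_iff[OF e] proj_in_piece[OF k(1) e] piece_subset_V[OF k(1)]
    by (metis gdist_self le_zero_eq subsetD)
  then have "decomp V E I VS ES e e [k] [e]" using decomp_single_piece[OF e k(1)] k(2) by simp
  moreover have "tail_nondegenerate e e [k]"
    unfolding tail_nondegenerate_def by (auto simp: geodesic_length)
  ultimately show ?thesis by blast
qed

lemma decomp_exists_bridge_step:
  assumes e: "e \<in> V" and x: "x \<in> V" and g0: "geodesic E e x p0" and n: "0 < d e x"
    and bridge: "\<forall>i\<in>I. \<not> ES i (p0 ! (d e x - 1)) x"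
    and dec: "decomp V E I VS ES e (p0 ! (d e x - 1)) ixs xs"
  shows "\<exists>k. decomp V E I VS ES e x (ixs @ [k]) (xs @ [x]) \<and> tail_nondegenerate e x (ixs @ [k])"
proof -
  define n where "n = d e x"
  have nl: "Suc (n - 1) < length p0" "p0 ! Suc (n - 1) = x"
    using geodesic_length[OF g0] geodesic_nth_last[OF g0] n unfolding n_def by auto
  obtain k where k: "k \<in> I" "x \<in> VS k" using vertex_in_piece[OF x] by blast
  have run: "piece_run e p0 k x (d e (proj e k)) (length p0 - 1)"
    using geodesic_run_into_piece[OF e k(1) g0 k(2)] .
  have "\<not> d e (proj e k) < n"
  proof
    assume "d e (proj e k) < n"
    then have "d e (proj e k) \<le> n - 1" by simp
    moreover have "n - 1 < length p0 - 1" using nl(1) by simp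
    moreover have "\<forall>m. d e (proj e k) \<le> m \<and> m < length p0 - 1 \<longrightarrow> ES k (p0 ! m) (p0 ! Suc m)"
      using run unfolding piece_run_def by blast
    ultimately have "ES k (p0 ! (n - 1)) (p0 ! Suc (n - 1))" by blast
    then show False using bridge k(1) nl(2) unfolding n_def by auto
  qed
  moreover have "d e (proj e k) \<le> n" using proj_closest[OF k(1) e k(2)] unfolding n_def .
  ultimately have kn: "d e (proj e k) = n" by simp
  have "p0 ! n = proj e k" using run kn unfolding piece_run_def by simp
  then have "proj e k = x" using nl(2) n unfolding n_def by simp
  then have "decomp V E I VS ES e x (ixs @ [k]) (xs @ [x])"
    using decomp_extend_bridge[OF e k g0] dec bridge kn n unfolding n_def by simp
  moreover have "tail_nondegenerate e x (ixs @ [k])"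
    unfolding tail_nondegenerate_def
  proof (intro allI impI)
    fix p i assume g: "geodesic E e x p" and i: "i \<in> I" "ES i (p ! (length p - 2)) x"
    have "p ! (n - 1) = p0 ! (n - 1)"
      using bridge_on_all_geodesics[OF g0 g nl(1)] bridge nl(2) unfolding n_def by auto
    moreover have "length p - 2 = n - 1" using geodesic_length[OF g] unfolding n_def by simp
    ultimately show "d e (proj e (last (ixs @ [k]))) < d e x" using bridge i unfolding n_def by auto
  qed
  ultimately show ?thesis by blast
qed

lemma decomp_exists_piece_step:
  assumes e: "e \<in> V" and x: "x \<in> V" and g0: "geodesic E e x p0" and n: "0 < d e x"
    and i: "i \<in> I" "ES i (p0 ! (d e x - 1)) x"
    and IH: "\<And>y. y \<in> V \<Longrightarrow> d e y < d e x \<Longrightarrow>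
      \<exists>ixs xs. decomp V E I VS ES e y ixs xs \<and> tail_nondegenerate e y ixs"
  shows "\<exists>ixs xs. decomp V E I VS ES e x ixs xs \<and> tail_nondegenerate e x ixs"
proof -
  define k where "k = d e (proj e i)"
  have w: "p0 ! (d e x - 1) \<in> VS i" "x \<in> VS i" using piece_edge_in_piece[OF i] by auto
  have "d e (p0 ! (d e x - 1)) = d e x - 1"
    using geodesic_gdist_nth(1)[OF g0, of "d e x - 1"] geodesic_length[OF g0] by simp
  then have kn: "k < d e x" using proj_closest[OF i(1) e w(1)] n unfolding k_def by simp
  have nd: "tail_nondegenerate e x (ixs @ [i])" for ixs
    using kn unfolding tail_nondegenerate_def k_def by simp
  show ?thesis
  proof (cases "k = 0")
    case True
    have "proj e i \<in> V" using proj_in_piece[OF i(1) e] piece_subset_V[OF i(1)] by auto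
    then have "proj e i = e" using d_eq_0_iff[OF e] True d_sym unfolding k_def by metis
    then show ?thesis using decomp_single_piece[OF e i(1) w(2)] nd[of "[]"] by auto
  next
    case False
    have kl: "k - 1 < length p0" using kn geodesic_length[OF g0] by simp
    define w' where "w' = p0 ! (k - 1)"
    have w': "w' \<in> V" "d e w' < d e x"
      using geodesic_in_V[OF g0 e] geodesic_gdist_nth(1)[OF g0 kl] kl kn unfolding w'_def by auto
    show ?thesis
    proof (cases "\<exists>i'\<in>I. ES i' w' (proj e i)")
      case True
      then obtain i' where i': "i' \<in> I" "ES i' (p0 ! (d e (proj e i) - 1)) (proj e i)"
        unfolding w'_def k_def by blast
      have "proj e i \<in> V" "d e (proj e i) < d e x"
        using proj_in_piece[OF i(1) e] piece_subset_V[OF i(1)] kn unfolding k_def by auto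
      then obtain ixs xs where "decomp V E I VS ES e (proj e i) ixs xs"
        "tail_nondegenerate e (proj e i) ixs" using IH by blast
      then have "decomp V E I VS ES e x (ixs @ [i]) (xs @ [x])"
        using decomp_extend_piece_edge[OF e i(1) w(2) g0 _ i'] False unfolding k_def by simp
      then show ?thesis using nd by blast
    next
      case no_edge: False
      obtain ixs xs where "decomp V E I VS ES e (p0 ! (d e (proj e i) - 1)) ixs xs"
        using IH[OF w'] unfolding w'_def k_def by blast
      then have "decomp V E I VS ES e x (ixs @ [i]) (xs @ [x])"
        using decomp_extend_bridge[OF e i(1) w(2) g0] no_edge False unfolding w'_def k_def by simp
      then show ?thesis using nd by blast
    qed
  qed
qed

lemma decomp_exists:
  assumes e: "e \<in> V"
  shows "x \<in> V \<Longrightarrow> \<exists>ixs xs. decomp V E I VS ES e x ixs xs \<and> tail_nondegenerate e x ixs"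
proof (induction "d e x" arbitrary: x rule: less_induct)
  case less
  show ?case
  proof (cases "x = e")
    case True
    then show ?thesis using decomp_exists_base[OF e] by simp
  next
    case False
    obtain p0 where g0: "geodesic E e x p0" using geodesic_between[OF e less.prems] .
    have n: "0 < d e x" using d_eq_0_iff[OF e less.prems] False by auto
    define w where "w = p0 ! (d e x - 1)"
    have w: "w \<in> V" "d e w < d e x"
      using geodesic_in_V[OF g0 e] geodesic_gdist_nth(1)[OF g0, of "d e x - 1"] geodesic_length[OF g0] n
      unfolding w_def by auto
    show ?thesis
    proof (cases "\<exists>i\<in>I. ES i w x")
      case True
      then show ?thesis using decomp_exists_piece_step[OF e less.prems g0 n] less.hyps unfolding w_def by blast
    next
      case False
      obtain ixs xs where "decomp V E I VS ES e w ixs xs" using less.hyps[OF w(2,1)] by blast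
      then show ?thesis
        using decomp_exists_bridge_step[OF e less.prems g0 n] False unfolding w_def by blast
    qed
  qed
qed

lemma xprime_eq_proj:
  assumes e: "e \<in> V" and x: "x \<in> V" and i: "i \<in> I"
  shows "xprime V E I VS ES e x i = proj x i"
proof -
  define ixs where "ixs = fst (dchoice V E I VS ES e x)"
  define xs where "xs = snd (dchoice V E I VS ES e x)"
  obtain ixs' xs' where "decomp V E I VS ES e x ixs' xs'" using decomp_exists[OF e x] by blast
  then have dec: "decomp V E I VS ES e x ixs xs"
    unfolding ixs_def xs_def dchoice_def by (metis (mono_tags, lifting) fst_conv snd_conv someI)
  then have "distinct ixs" using decomp_wf by blast
  show ?thesis
  proof (cases "i \<in> set ixs")
    case True
    then obtain j where j: "j < length ixs" "ixs!j = i" by (metis in_set_conv_nth)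
    then have "(THE j. j < length ixs \<and> ixs!j = i) = j"
      using nth_eq_iff_index_eq[OF \<open>distinct ixs\<close>] by auto
    then show ?thesis
      using True decomp_point_eq_proj[OF e x dec j(1)] j(2)
      unfolding xprime_def Let_def ixs_def[symmetric] xs_def[symmetric] by simp
  next
    case False
    then show ?thesis
      using proj_eq_if_not_in_decomp[OF e x dec i]
      unfolding xprime_def Let_def ixs_def[symmetric] xs_def[symmetric] by simp
  qed
qed

lemma sigma_I_eq_sum_proj:
  assumes e: "e \<in> V" and x: "x \<in> V" and y: "y \<in> V"
  shows "sigma_I V E I VS ES e x y = (\<Sum>i\<in>{i\<in>I. proj x i \<noteq> proj y i}. d (proj x i) (proj y i))"
  unfolding sigma_I_def using xprime_eq_proj[OF e x] xprime_eq_proj[OF e y]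
  by (intro sum.cong) auto

end

theorem lemma4p6:
  fixes V :: "'v set" and E :: "'v \<Rightarrow> 'v \<Rightarrow> bool"
    and I :: "'i set" and VS :: "'i \<Rightarrow> 'v set" and ES :: "'i \<Rightarrow> 'v \<Rightarrow> 'v \<Rightarrow> bool"
    and e :: 'v
  assumes "connected_graph V E"
    and "tree_graded V E I VS ES"
    and "e \<in> V"
    and "x \<in> V" and "y \<in> V"
  shows "real (gdist E x y) / 2 \<le> real (dprime V E I VS ES e x y)
         \<and> real (dprime V E I VS ES e x y) \<le> 2 * real (gdist E x y)"
proof -
  interpret tree_graded_graph V E I VS ES using assms(1,2) by unfold_locales
  obtain p where g: "geodesic E x y p" using geodesic_between[OF assms(4,5)] .
  have "d x y = sigma_I V E I VS ES e x y + card (bridge_positions p)"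
    using d_eq_sum_proj_plus_bridges[OF assms(4,5) g] sigma_I_eq_sum_proj[OF assms(3-5)] by simp
  moreover have "card (bridge_positions p) \<le> sigma_T V E I VS e x y"
    using card_bridge_positions_le_sigma_T[OF assms(4) g] .
  moreover have "sigma_T V E I VS e x y \<le> d x y" using sigma_T_le_d[OF assms(4,5)] .
  ultimately have "d x y \<le> dprime V E I VS ES e x y" "dprime V E I VS ES e x y \<le> 2 * d x y"
    unfolding dprime_def by linarith+
  then show ?thesis by linarith
qed

end
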